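(* Let $w$ be a weight on $(0,\infty)$ and $0<\alpha<1$. Then $\Gamma^1_\alpha(w)$ is a Banach space (i.e. its quasi-norm is equivalent to a norm) if and only if $w\in R_1$ and $\Gamma^1_\alpha(w)=\Lambda^1(w)$.
   Context: A weight is a nonnegative locally integrable measurable function on $(0,\infty)$. For a measurable function $f$ on $\mathbb{R}^n$, $f^*$ is its decreasing rearrangement and $f^{**}(t)=\frac1t\int_0^t f^*(s)\,ds$. $\Gamma^1_\alpha(w)$ is the set of $f$ with $\|f\|_{\Gamma^1_\alpha(w)}=\int_0^\infty (f^*(t))^\alpha(f^{**}(t))^{1-\alpha}w(t)\,dt<\infty$, and $\Lambda^1(w)$ the set of $f$ with $\|f\|_{\Lambda^1(w)}=\int_0^\infty f^*(t)w(t)\,dt<\infty$. Equality $X=Y$ of such spaces means they coincide with equivalent quasi-norms. $w\in R_1$ means there is $C$ with $\frac1s\int_0^s w\le\frac Cr\int_0^r w$ for all $0<r<s<\infty$. *)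

theory Defs
  imports "HOL-Analysis.Analysis"
begin

text \<open>Weights: nonnegative, measurable, locally integrable on (0,oo)
  (read as: integrable on every interval (0,t], so that W(t) is finite).\<close>
definition is_weight :: "(real \<Rightarrow> real) \<Rightarrow> bool" where
  "is_weight w \<longleftrightarrow> w \<in> borel_measurable lborel \<and> (\<forall>t>0. w t \<ge> 0)
     \<and> (\<forall>t>0. set_integrable lborel {0<..t} w)"

definition distrib_fun :: "('a::euclidean_space \<Rightarrow> real) \<Rightarrow> ennreal \<Rightarrow> ennreal" where
  "distrib_fun f lam = emeasure lebesgue {x. ennreal \<bar>f x\<bar> > lam}"

definition rearr :: "('a::euclidean_space \<Rightarrow> real) \<Rightarrow> real \<Rightarrow> ennreal" where
  "rearr f t = Inf {lam. distrib_fun f lam \<le> ennreal t}"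

definition max_rearr :: "('a::euclidean_space \<Rightarrow> real) \<Rightarrow> real \<Rightarrow> ennreal" where
  "max_rearr f t = ennreal (1 / t) * (\<integral>\<^sup>+ s\<in>{0<..<t}. rearr f s \<partial>lborel)"

definition epowr :: "ennreal \<Rightarrow> real \<Rightarrow> ennreal" where
  "epowr x a = (if x = \<infinity> then \<infinity> else ennreal (enn2real x powr a))"

definition Gamma_norm :: "real \<Rightarrow> (real \<Rightarrow> real) \<Rightarrow> ('a::euclidean_space \<Rightarrow> real) \<Rightarrow> ennreal" where
  "Gamma_norm \<alpha> w f = (\<integral>\<^sup>+ t\<in>{0<..}. epowr (rearr f t) \<alpha> * epowr (max_rearr f t) (1 - \<alpha>)
                              * ennreal (w t) \<partial>lborel)"

definition Lambda_norm :: "(real \<Rightarrow> real) \<Rightarrow> ('a::euclidean_space \<Rightarrow> real) \<Rightarrow> ennreal" where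
  "Lambda_norm w f = (\<integral>\<^sup>+ t\<in>{0<..}. rearr f t * ennreal (w t) \<partial>lborel)"

definition Gamma_space :: "real \<Rightarrow> (real \<Rightarrow> real) \<Rightarrow> ('a::euclidean_space \<Rightarrow> real) set" where
  "Gamma_space \<alpha> w = {f. f \<in> borel_measurable lebesgue \<and> Gamma_norm \<alpha> w f < \<infinity>}"

text \<open>X = Y with equivalent quasi-norms (for measurable functions; both sides are
  infinite outside the spaces).\<close>
definition Gamma_eq_Lambda :: "real \<Rightarrow> (real \<Rightarrow> real) \<Rightarrow> 'a::euclidean_space itself \<Rightarrow> bool" where
  "Gamma_eq_Lambda \<alpha> w _ \<longleftrightarrow> (\<exists>C>0. \<forall>f::'a \<Rightarrow> real. f \<in> borel_measurable lebesgue \<longrightarrow>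
      Gamma_norm \<alpha> w f \<le> ennreal C * Lambda_norm w f \<and> Lambda_norm w f \<le> ennreal C * Gamma_norm \<alpha> w f)"

definition R1 :: "(real \<Rightarrow> real) \<Rightarrow> bool" where
  "R1 w \<longleftrightarrow> (\<exists>C. \<forall>r s. 0 < r \<and> r < s \<longrightarrow>
      (1 / s) * (\<integral>x\<in>{0<..s}. w x \<partial>lborel) \<le> (C / r) * (\<integral>x\<in>{0<..r}. w x \<partial>lborel))"

definition Gamma_normable :: "real \<Rightarrow> (real \<Rightarrow> real) \<Rightarrow> 'a::euclidean_space itself \<Rightarrow> bool" where
  "Gamma_normable \<alpha> w _ \<longleftrightarrow> (\<exists>N :: ('a \<Rightarrow> real) \<Rightarrow> real.
      (\<forall>f\<in>Gamma_space \<alpha> w. \<forall>g\<in>Gamma_space \<alpha> w. N (\<lambda>x. f x + g x) \<le> N f + N g)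
    \<and> (\<forall>f\<in>Gamma_space \<alpha> w. \<forall>c. N (\<lambda>x. c * f x) = \<bar>c\<bar> * N f)
    \<and> (\<exists>c C. c > 0 \<and> C > 0 \<and> (\<forall>f\<in>Gamma_space \<alpha> w.
          c * enn2real (Gamma_norm \<alpha> w f) \<le> N f \<and> N f \<le> C * enn2real (Gamma_norm \<alpha> w f))))"

end

(*
  If the quasi-norm of Gamma^1_alpha(w) is equivalent to a norm, it is subadditive up to a
  constant K on finite sums of nonnegative functions. Applied to the indicators of n disjoint
  cubes of measure s/n this gives W(s) <= K n W(s/n) for W(t) = int_0^t w, i.e. w in R_1.
  Applied to the level-set decomposition f ~ sum_k h 1{|f| >= k h} it gives
  Gamma(f) <= K sum_k h W(lambda_f(k h)) <= K Lambda(f), and Lambda <= Gamma always holds.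

  Conversely, for w in R_1 the function W is equivalent to the concave function
  V(u) = inf_s W(s) (1 + u/s). Piecewise linear concave approximations of V are positive
  combinations of the functions u -> min u t, so int_0^oo V(lambda_f) is, up to constants,
  a supremum of positive combinations of the sublinear K-functionals int_0^t f^*. This gives
  a norm equivalent to Lambda^1(w), which the equality Gamma^1_alpha(w) = Lambda^1(w)
  transfers to Gamma^1_alpha(w).
*)

theory Submission
  imports Defs
begin

section \<open>Distribution function and decreasing rearrangement\<close>

lemma level_set_sets_lebesgue:
  assumes "f \<in> borel_measurable lebesgue"
  shows "{x. l < ennreal \<bar>f x\<bar>} \<in> sets lebesgue"
proof -
  have "{x \<in> space lebesgue. l < ennreal \<bar>f x\<bar>} \<in> sets lebesgue"
    using assms by measurable
  then show ?thesis by simp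
qed

lemma distrib_fun_antimono:
  assumes "f \<in> borel_measurable lebesgue" and "l \<le> m"
  shows "distrib_fun f m \<le> distrib_fun f l"
  unfolding distrib_fun_def
  by (rule emeasure_mono) (use assms level_set_sets_lebesgue in \<open>auto intro: order.strict_trans1\<close>)

lemma distrib_fun_mono_abs:
  assumes "f \<in> borel_measurable lebesgue" and "\<And>x. \<bar>g x\<bar> \<le> \<bar>f x\<bar>"
  shows "distrib_fun g l \<le> distrib_fun f l"
  unfolding distrib_fun_def
  by (rule emeasure_mono) (use assms level_set_sets_lebesgue in \<open>auto intro: order.strict_trans2\<close>)

lemma distrib_fun_right_continuous:
  assumes f: "f \<in> borel_measurable lebesgue" and t: "t < distrib_fun f l"
  shows "\<exists>m>l. t < distrib_fun f m"
proof (cases l)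
  case top
  then show ?thesis using t by (simp add: distrib_fun_def)
next
  case (real r)
  define A where "A n = {x. ennreal (r + 1 / Suc n) < ennreal \<bar>f x\<bar>}" for n :: nat
  have A_sets: "range A \<subseteq> sets lebesgue"
    unfolding A_def using level_set_sets_lebesgue[OF f] by auto
  have "incseq A"
  proof (rule incseq_SucI)
    fix n
    have "ennreal (r + 1 / Suc (Suc n)) \<le> ennreal (r + 1 / Suc n)"
      by (rule ennreal_leI) (simp add: frac_le)
    then show "A n \<subseteq> A (Suc n)"
      unfolding A_def using order.strict_trans1 by blast
  qed
  have "\<Union> (range A) = {x. l < ennreal \<bar>f x\<bar>}"
  proof (intro set_eqI iffI)
    fix x assume "x \<in> \<Union> (range A)"
    then obtain n where "ennreal (r + 1 / Suc n) < ennreal \<bar>f x\<bar>" unfolding A_def by auto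
    then have "r < \<bar>f x\<bar>"
      using real by (subst (asm) ennreal_less_iff) (auto intro: order.strict_trans1[rotated])
    then show "x \<in> {x. l < ennreal \<bar>f x\<bar>}"
      using real by (simp add: ennreal_less_iff)
  next
    fix x assume "x \<in> {x. l < ennreal \<bar>f x\<bar>}"
    then have "0 < \<bar>f x\<bar> - r" using real by (simp add: ennreal_less_iff)
    then obtain n where "1 / Suc n < \<bar>f x\<bar> - r" by (rule nat_approx_posE)
    then have "ennreal (r + 1 / Suc n) < ennreal \<bar>f x\<bar>"
      using real by (subst ennreal_less_iff) auto
    then show "x \<in> \<Union> (range A)" unfolding A_def by auto
  qed
  then have "distrib_fun f l = (SUP n. distrib_fun f (ennreal (r + 1 / Suc n)))"
    unfolding distrib_fun_def A_def[symmetric] using SUP_emeasure_incseq[OF A_sets \<open>incseq A\<close>] by simp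
  with t obtain n where "t < distrib_fun f (ennreal (r + 1 / Suc n))"
    by (auto simp: less_SUP_iff)
  moreover have "l < ennreal (r + 1 / Suc n)" using real by (simp add: ennreal_less_iff)
  ultimately show ?thesis by blast
qed

lemma rearr_less_iff:
  assumes f: "f \<in> borel_measurable lebesgue"
  shows "l < rearr f t \<longleftrightarrow> ennreal t < distrib_fun f l"
proof
  assume "l < rearr f t"
  then show "ennreal t < distrib_fun f l"
    unfolding rearr_def by (metis Inf_lower leD mem_Collect_eq not_le_imp_less)
next
  assume "ennreal t < distrib_fun f l"
  then obtain m where m: "m > l" "ennreal t < distrib_fun f m"
    using distrib_fun_right_continuous[OF f] by blast
  have "m \<le> rearr f t"
    unfolding rearr_def
  proof (rule Inf_greatest)
    fix n assume "n \<in> {lam. distrib_fun f lam \<le> ennreal t}"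
    then show "m \<le> n"
      using m distrib_fun_antimono[OF f, of n m] by (metis linorder_le_cases mem_Collect_eq not_le order_trans)
  qed
  then show "l < rearr f t" using m by simp
qed

lemma rearr_antimono: "t \<le> t' \<Longrightarrow> rearr f t' \<le> rearr f t"
  unfolding rearr_def by (rule Inf_superset_mono) (auto intro: order.trans ennreal_leI)

lemma rearr_mono_abs:
  assumes "f \<in> borel_measurable lebesgue" and "\<And>x. \<bar>g x\<bar> \<le> \<bar>f x\<bar>"
  shows "rearr g t \<le> rearr f t"
  unfolding rearr_def
  by (rule Inf_superset_mono) (use distrib_fun_mono_abs[OF assms] in \<open>auto intro: order.trans\<close>)

lemma borel_measurable_antimono_ennreal:
  fixes g :: "real \<Rightarrow> ennreal"
  assumes antimono: "\<And>x y. x \<le> y \<Longrightarrow> g y \<le> g x"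
  shows "g \<in> borel_measurable borel"
proof (rule borel_measurableI_greater)
  fix y
  define D where "D = {x. y < g x}"
  have down: "x \<in> D" if "z \<in> D" "x \<le> z" for x z
    using that antimono[of x z] unfolding D_def by (auto intro: order.strict_trans2)
  have "D \<in> sets borel"
  proof (cases "D = UNIV \<or> D = {}")
    case False
    then obtain z where z: "z \<notin> D" and ne: "D \<noteq> {}" by auto
    have bdd: "bdd_above D"
      by (rule bdd_aboveI[of _ z]) (use z down in \<open>metis linear\<close>)
    have "D = {..<Sup D} \<union> (D \<inter> {Sup D})"
    proof (intro set_eqI iffI)
      fix x assume "x \<in> D"
      then show "x \<in> {..<Sup D} \<union> (D \<inter> {Sup D})"
        using cSup_upper[OF _ bdd] by fastforce
    next
      fix x assume "x \<in> {..<Sup D} \<union> (D \<inter> {Sup D})"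
      then show "x \<in> D"
        using less_cSup_iff[OF ne bdd] down by (auto intro: less_imp_le)
    qed
    moreover have "D \<inter> {Sup D} \<in> sets borel" by (cases "Sup D \<in> D") auto
    ultimately show ?thesis by (metis sets.Un lessThan_borel)
  qed auto
  then show "{x \<in> space borel. y < g x} \<in> sets borel" unfolding D_def by simp
qed

lemma rearr_measurable[measurable]: "rearr f \<in> borel_measurable borel"
  by (rule borel_measurable_antimono_ennreal) (rule rearr_antimono)

lemma distrib_fun_measurable[measurable]:
  assumes "f \<in> borel_measurable lebesgue"
  shows "(\<lambda>l. distrib_fun f (ennreal l)) \<in> borel_measurable borel"
  by (rule borel_measurable_antimono_ennreal) (intro distrib_fun_antimono[OF assms] ennreal_leI)

lemma max_rearr_measurable[measurable]: "max_rearr f \<in> borel_measurable borel"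
proof -
  have "{p::real \<times> real. 0 < snd p \<and> snd p < fst p} \<in> sets (lborel \<Otimes>\<^sub>M lborel)"
  proof -
    have "{p \<in> space (lborel \<Otimes>\<^sub>M lborel). 0 < snd p \<and> snd p < (fst p :: real)} \<in> sets (lborel \<Otimes>\<^sub>M lborel)"
      by measurable
    then show ?thesis by (simp add: space_pair_measure)
  qed
  moreover have "(\<lambda>p::real \<times> real. indicator {0<..<fst p} (snd p) :: ennreal)
      = indicator {p. 0 < snd p \<and> snd p < fst p}"
    by (auto simp: indicator_def fun_eq_iff)
  ultimately have [measurable]:
      "(\<lambda>p::real \<times> real. indicator {0<..<fst p} (snd p) :: ennreal) \<in> borel_measurable (lborel \<Otimes>\<^sub>M lborel)"
    by simp
  have "(\<lambda>t. \<integral>\<^sup>+ s. rearr f s * indicator {0<..<t} s \<partial>lborel) \<in> borel_measurable lborel"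
    by (rule lborel.borel_measurable_nn_integral) measurable
  then have [measurable]: "(\<lambda>t. \<integral>\<^sup>+ s. rearr f s * indicator {0<..<t} s \<partial>lborel) \<in> borel_measurable borel"
    by simp
  show ?thesis unfolding max_rearr_def by measurable
qed

lemma rearr_le_max_rearr:
  assumes "t > 0" shows "rearr f t \<le> max_rearr f t"
proof -
  have "rearr f t * ennreal t = (\<integral>\<^sup>+ s\<in>{0<..<t}. rearr f t \<partial>lborel)"
    using assms by (simp add: nn_integral_cmult_indicator mult.commute)
  also have "\<dots> \<le> (\<integral>\<^sup>+ s\<in>{0<..<t}. rearr f s \<partial>lborel)"
    by (intro nn_integral_mono) (auto simp: indicator_def intro: rearr_antimono)
  finally have "ennreal (1 / t) * (rearr f t * ennreal t) \<le> max_rearr f t"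
    unfolding max_rearr_def by (intro mult_left_mono) auto
  moreover have "ennreal (1 / t) * ennreal t = 1"
    using assms by (simp flip: ennreal_mult)
  then have "ennreal (1 / t) * (rearr f t * ennreal t) = rearr f t"
    by (metis mult.assoc mult.commute mult_1)
  ultimately show ?thesis by simp
qed

lemma max_rearr_mono_abs:
  assumes "f \<in> borel_measurable lebesgue" and "\<And>x. \<bar>g x\<bar> \<le> \<bar>f x\<bar>"
  shows "max_rearr g t \<le> max_rearr f t"
  unfolding max_rearr_def
  by (intro mult_left_mono nn_integral_mono) (auto simp: indicator_def intro: rearr_mono_abs[OF assms])

section \<open>Real powers of extended reals and the \<open>\<Gamma>\<close>-functional\<close>

lemma epowr_mono: "x \<le> y \<Longrightarrow> a > 0 \<Longrightarrow> epowr x a \<le> epowr y a"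
  unfolding epowr_def by (cases x; cases y) (auto intro!: ennreal_leI powr_mono2 simp: top_unique)

lemma epowr_pos: "a > 0 \<Longrightarrow> x > 0 \<Longrightarrow> epowr x a > 0"
  unfolding epowr_def by (cases x) (auto simp: ennreal_less_iff)

lemma epowr_ennreal: "r \<ge> 0 \<Longrightarrow> epowr (ennreal r) a = ennreal (r powr a)"
  unfolding epowr_def by simp

lemma epowr_measurable[measurable]:
  assumes [measurable]: "g \<in> borel_measurable M"
  shows "(\<lambda>x. epowr (g x) a) \<in> borel_measurable M"
  unfolding epowr_def by measurable

lemma le_epowr_mult_epowr:
  assumes "x \<le> y" "0 < \<alpha>" "\<alpha> < 1"
  shows "x \<le> epowr x \<alpha> * epowr y (1 - \<alpha>)"
proof (cases y)
  case top
  then show ?thesis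
    using epowr_pos[of \<alpha> x] assms unfolding epowr_def
    by (cases "x = 0") (auto simp: ennreal_mult_top zero_less_iff_neq_zero)
next
  case (real b)
  then obtain a where ab: "x = ennreal a" "a \<ge> 0" "a \<le> b"
    using assms(1) by (cases x) (auto simp: top_unique)
  have "a = a powr \<alpha> * a powr (1 - \<alpha>)"
    using ab by (cases "a = 0") (auto simp: powr_add[symmetric] assms)
  also have "\<dots> \<le> a powr \<alpha> * b powr (1 - \<alpha>)"
    using ab assms by (intro mult_left_mono powr_mono2) auto
  finally show ?thesis
    using ab real by (simp add: epowr_ennreal ennreal_mult[symmetric] ennreal_leI)
qed

lemma epowr_SUP_le:
  assumes a: "a > 0"
  shows "epowr (SUP n. x n) a \<le> (SUP n::nat. epowr (x n) a)"
proof (rule dense_le)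
  fix y assume y: "y < epowr (SUP n. x n) a"
  then obtain r where r: "y = ennreal r" "r \<ge> 0" by (cases y) auto
  define z where "z = ennreal (r powr (1 / a))"
  have "z < (SUP n. x n)"
  proof (cases "SUP n. x n")
    case (real q)
    have "r < q powr a" using y real r by (simp add: epowr_ennreal ennreal_less_iff)
    then have "r powr (1 / a) < (q powr a) powr (1 / a)" using r a by (intro powr_less_mono2) auto
    then show ?thesis unfolding z_def using real a by (simp add: powr_powr ennreal_less_iff)
  next
    case top
    show ?thesis unfolding z_def top by simp
  qed
  then obtain n where "z < x n" by (auto simp: less_SUP_iff)
  then have "epowr z a \<le> epowr (x n) a" using a by (intro epowr_mono) auto
  moreover have "epowr z a = y" unfolding z_def r using r a by (simp add: epowr_ennreal powr_powr)
  ultimately show "y \<le> (SUP n. epowr (x n) a)" by (metis SUP_upper2 UNIV_I)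
qed

lemma SUP_mult_SUP_le_incseq:
  fixes a b :: "nat \<Rightarrow> ennreal"
  assumes "incseq a" "incseq b"
  shows "(SUP n. a n) * (SUP n. b n) \<le> (SUP n. a n * b n)"
proof -
  have "(SUP n. a n) * (SUP n. b n) = (SUP i. a i * (SUP j. b j))"
    by (rule SUP_mult_right_ennreal)
  also have "\<dots> = (SUP i. SUP j. a i * b j)"
    by (simp add: SUP_mult_left_ennreal)
  also have "\<dots> \<le> (SUP n. a n * b n)"
  proof (intro SUP_least)
    fix i j
    have "a i * b j \<le> a (max i j) * b (max i j)"
      using assms by (intro mult_mono) (auto simp: incseq_def)
    then show "a i * b j \<le> (SUP n. a n * b n)" by (metis SUP_upper2 UNIV_I)
  qed
  finally show ?thesis .
qed

lemma Lambda_le_Gamma: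
  assumes "0 < \<alpha>" "\<alpha> < 1"
  shows "Lambda_norm w f \<le> Gamma_norm \<alpha> w f"
  unfolding Lambda_norm_def Gamma_norm_def
proof (intro nn_integral_mono)
  fix t :: real
  show "rearr f t * ennreal (w t) * indicator {0<..} t
    \<le> epowr (rearr f t) \<alpha> * epowr (max_rearr f t) (1 - \<alpha>) * ennreal (w t) * indicator {0<..} t"
    by (cases "t > 0") (auto intro!: mult_right_mono le_epowr_mult_epowr rearr_le_max_rearr assms)
qed

lemma Gamma_norm_mono_abs:
  assumes "f \<in> borel_measurable lebesgue" "\<And>x. \<bar>g x\<bar> \<le> \<bar>f x\<bar>" and "0 < \<alpha>" "\<alpha> < 1"
  shows "Gamma_norm \<alpha> w g \<le> Gamma_norm \<alpha> w f"
  unfolding Gamma_norm_def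
  by (intro nn_integral_mono mult_right_mono mult_mono epowr_mono rearr_mono_abs[OF assms(1,2)]
        max_rearr_mono_abs[OF assms(1,2)]) (use assms in \<open>auto simp: indicator_def\<close>)

lemma Gamma_space_mono_abs:
  assumes "f \<in> Gamma_space \<alpha> w" "g \<in> borel_measurable lebesgue" "\<And>x. \<bar>g x\<bar> \<le> \<bar>f x\<bar>"
    and "0 < \<alpha>" "\<alpha> < 1"
  shows "g \<in> Gamma_space \<alpha> w"
  using assms Gamma_norm_mono_abs[of f g \<alpha> w] unfolding Gamma_space_def by auto

context
  fixes f :: "'a::euclidean_space \<Rightarrow> real" and g :: "nat \<Rightarrow> 'a \<Rightarrow> real"
  assumes f: "f \<in> borel_measurable lebesgue"
    and g: "\<And>n. g n \<in> borel_measurable lebesgue"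
    and g_inc: "\<And>n x. \<bar>g n x\<bar> \<le> \<bar>g (Suc n) x\<bar>"
    and g_exhausts: "\<And>x l. l < \<bar>f x\<bar> \<Longrightarrow> \<exists>n. l < \<bar>g n x\<bar>"
begin

lemma abs_approx_mono: "n \<le> m \<Longrightarrow> \<bar>g n x\<bar> \<le> \<bar>g m x\<bar>"
  by (induction m) (auto intro: order.trans[OF _ g_inc] simp: le_Suc_eq)

lemma distrib_fun_le_SUP: "distrib_fun f l \<le> (SUP n. distrib_fun (g n) l)"
proof (cases l)
  case (real r)
  define A where "A n = {x. l < ennreal \<bar>g n x\<bar>}" for n
  have A_sets: "range A \<subseteq> sets lebesgue"
    unfolding A_def using level_set_sets_lebesgue[OF g] by auto
  have "incseq A"
    unfolding A_def incseq_def using abs_approx_mono by (auto intro: order.strict_trans2 ennreal_leI)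
  have "{x. l < ennreal \<bar>f x\<bar>} \<subseteq> \<Union> (range A)"
  proof
    fix x assume "x \<in> {x. l < ennreal \<bar>f x\<bar>}"
    then obtain n where "r < \<bar>g n x\<bar>" using real g_exhausts by (auto simp: ennreal_less_iff)
    then show "x \<in> \<Union> (range A)" unfolding A_def using real by (auto simp: ennreal_less_iff)
  qed
  then have "distrib_fun f l \<le> emeasure lebesgue (\<Union> (range A))"
    unfolding distrib_fun_def using A_sets by (intro emeasure_mono) auto
  also have "\<dots> = (SUP n. emeasure lebesgue (A n))"
    using SUP_emeasure_incseq[OF A_sets \<open>incseq A\<close>] by simp
  finally show ?thesis unfolding A_def distrib_fun_def .
qed (simp add: distrib_fun_def)

lemma rearr_le_SUP: "rearr f t \<le> (SUP n. rearr (g n) t)"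
proof (rule dense_le)
  fix y assume "y < rearr f t"
  then have "ennreal t < (SUP n. distrib_fun (g n) y)"
    using rearr_less_iff[OF f] distrib_fun_le_SUP order.strict_trans2 by blast
  then obtain n where "ennreal t < distrib_fun (g n) y" by (auto simp: less_SUP_iff)
  then have "y < rearr (g n) t" using rearr_less_iff[OF g] by blast
  then show "y \<le> (SUP n. rearr (g n) t)" by (meson SUP_upper UNIV_I less_imp_le order.strict_trans2)
qed

lemma incseq_rearr_approx: "incseq (\<lambda>n. rearr (g n) t)"
  unfolding incseq_def by (auto intro!: rearr_mono_abs[OF g] abs_approx_mono)

lemma incseq_max_rearr_approx: "incseq (\<lambda>n. max_rearr (g n) t)"
  unfolding incseq_def by (auto intro!: max_rearr_mono_abs[OF g] abs_approx_mono)

lemma max_rearr_le_SUP: "max_rearr f t \<le> (SUP n. max_rearr (g n) t)"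
proof -
  have "(\<integral>\<^sup>+ s\<in>{0<..<t}. rearr f s \<partial>lborel) \<le> (\<integral>\<^sup>+ s. (SUP n. rearr (g n) s * indicator {0<..<t} s) \<partial>lborel)"
    by (intro nn_integral_mono)
      (auto simp: indicator_def intro: rearr_le_SUP)
  also have "\<dots> = (SUP n. \<integral>\<^sup>+ s\<in>{0<..<t}. rearr (g n) s \<partial>lborel)"
    by (rule nn_integral_monotone_convergence_SUP[
          of "\<lambda>n s. rearr (g n) s * indicator {0<..<t} s"])
      (use incseq_rearr_approx in \<open>auto simp: incseq_def le_fun_def intro: mult_right_mono\<close>)
  finally show ?thesis
    unfolding max_rearr_def SUP_mult_left_ennreal[symmetric] by (rule mult_left_mono) simp
qed

lemma Gamma_norm_le_SUP:
  assumes "0 < \<alpha>" "\<alpha> < 1" and [measurable]: "w \<in> borel_measurable borel"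
  shows "Gamma_norm \<alpha> w f \<le> (SUP n. Gamma_norm \<alpha> w (g n))"
proof -
  define F where "F n t = epowr (rearr (g n) t) \<alpha> * epowr (max_rearr (g n) t) (1 - \<alpha>)" for n t
  have F_inc: "incseq (\<lambda>n. F n t)" for t
    unfolding F_def incseq_def using assms incseq_rearr_approx incseq_max_rearr_approx
    by (auto simp: incseq_def intro!: mult_mono epowr_mono)
  have "Gamma_norm \<alpha> w f \<le> (\<integral>\<^sup>+ t. (SUP n. F n t * ennreal (w t) * indicator {0<..} t) \<partial>lborel)"
    unfolding Gamma_norm_def
  proof (intro nn_integral_mono)
    fix t
    have "epowr (rearr f t) \<alpha> * epowr (max_rearr f t) (1 - \<alpha>)
        \<le> epowr (SUP n. rearr (g n) t) \<alpha> * epowr (SUP n. max_rearr (g n) t) (1 - \<alpha>)"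
      using assms by (intro mult_mono epowr_mono rearr_le_SUP max_rearr_le_SUP) auto
    also have "\<dots> \<le> (SUP n. epowr (rearr (g n) t) \<alpha>) * (SUP n. epowr (max_rearr (g n) t) (1 - \<alpha>))"
      using assms by (intro mult_mono epowr_SUP_le) auto
    also have "\<dots> \<le> (SUP n. F n t)"
      unfolding F_def using assms incseq_rearr_approx incseq_max_rearr_approx
      by (intro SUP_mult_SUP_le_incseq) (auto simp: incseq_def intro!: epowr_mono)
    finally show "epowr (rearr f t) \<alpha> * epowr (max_rearr f t) (1 - \<alpha>) * ennreal (w t) * indicator {0<..} t
        \<le> (SUP n. F n t * ennreal (w t) * indicator {0<..} t)"
      unfolding mult.assoc[of _ "ennreal (w t)"] SUP_mult_right_ennreal[symmetric]
      by (rule mult_right_mono) simp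
  qed
  also have "\<dots> = (SUP n. \<integral>\<^sup>+ t. F n t * ennreal (w t) * indicator {0<..} t \<partial>lborel)"
  proof (rule nn_integral_monotone_convergence_SUP)
    show "incseq (\<lambda>n t. F n t * ennreal (w t) * indicator {0<..} t)"
      using F_inc by (auto simp: incseq_def le_fun_def intro!: mult_right_mono)
  qed (unfold F_def, measurable)
  also have "\<dots> = (SUP n. Gamma_norm \<alpha> w (g n))"
    unfolding Gamma_norm_def F_def ..
  finally show ?thesis .
qed

end

section \<open>The cumulative weight and the layer-cake formula for \<open>\<Lambda>\<close>\<close>

text \<open>\<open>W(u) = \<integral>\<^sub>0\<^sup>u w\<close>, for \<open>u\<close> in \<open>[0,\<infinity>]\<close> since it is evaluated at values of the distribution
  function.\<close>

definition cum_weight :: "(real \<Rightarrow> real) \<Rightarrow> ennreal \<Rightarrow> ennreal" where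
  "cum_weight w u = (\<integral>\<^sup>+ t\<in>{t. 0 < t \<and> ennreal t < u}. ennreal (w t) \<partial>lborel)"

definition cum_weight_real :: "(real \<Rightarrow> real) \<Rightarrow> real \<Rightarrow> real" where
  "cum_weight_real w s = (\<integral>x\<in>{0<..s}. w x \<partial>lborel)"

lemma weight_borel_measurable: "is_weight w \<Longrightarrow> w \<in> borel_measurable borel"
  unfolding is_weight_def by simp

lemma cum_weight_mono: "u \<le> v \<Longrightarrow> cum_weight w u \<le> cum_weight w v"
  unfolding cum_weight_def
  by (intro nn_integral_mono) (auto simp: indicator_def intro: order.strict_trans2)

lemma cum_weight_distrib_fun_measurable[measurable]:
  assumes "f \<in> borel_measurable lebesgue"
  shows "(\<lambda>l. cum_weight w (distrib_fun f (ennreal l))) \<in> borel_measurable borel"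
  by (rule borel_measurable_antimono_ennreal) (intro cum_weight_mono distrib_fun_antimono[OF assms] ennreal_leI)

lemma cum_weight_zero[simp]: "cum_weight w 0 = 0"
  unfolding cum_weight_def by simp

lemma cum_weight_ennreal:
  "m \<ge> 0 \<Longrightarrow> cum_weight w (ennreal m) = (\<integral>\<^sup>+ t\<in>{0<..<m}. ennreal (w t) \<partial>lborel)"
  unfolding cum_weight_def by (intro nn_integral_cong) (auto simp: indicator_def ennreal_less_iff)

lemma cum_weight_real_nonneg: "is_weight w \<Longrightarrow> cum_weight_real w s \<ge> 0"
  unfolding cum_weight_real_def set_lebesgue_integral_def
  by (rule Bochner_Integration.integral_nonneg) (auto simp: is_weight_def indicator_def)

lemma cum_weight_eq_real:
  assumes w: "is_weight w" and s: "s > 0"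
  shows "cum_weight w (ennreal s) = ennreal (cum_weight_real w s)"
proof -
  have int: "integrable lborel (\<lambda>x. indicator {0<..s} x *\<^sub>R w x)"
    using w s unfolding is_weight_def set_integrable_def by auto
  have "cum_weight w (ennreal s) = (\<integral>\<^sup>+ t\<in>{0<..s}. ennreal (w t) \<partial>lborel)"
    unfolding cum_weight_ennreal[OF less_imp_le[OF s]]
    by (intro nn_integral_cong_AE) (use AE_lborel_singleton[of s] in \<open>auto simp: indicator_def elim!: eventually_mono\<close>)
  also have "\<dots> = (\<integral>\<^sup>+ x. ennreal (indicator {0<..s} x *\<^sub>R w x) \<partial>lborel)"
    by (intro nn_integral_cong) (auto simp: indicator_def)
  also have "\<dots> = ennreal (cum_weight_real w s)"
    unfolding cum_weight_real_def set_lebesgue_integral_def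
    by (rule nn_integral_eq_integral[OF int]) (use w in \<open>auto simp: is_weight_def indicator_def\<close>)
  finally show ?thesis .
qed

lemma cum_weight_real_mono:
  assumes w: "is_weight w" and "0 \<le> s" "s \<le> s'"
  shows "cum_weight_real w s \<le> cum_weight_real w s'"
proof (cases "s = 0")
  case True
  then show ?thesis
    using cum_weight_real_nonneg[OF w, of s'] by (simp add: cum_weight_real_def set_lebesgue_integral_def)
next
  case False
  then have "ennreal (cum_weight_real w s) \<le> ennreal (cum_weight_real w s')"
    using assms cum_weight_mono[of "ennreal s" "ennreal s'" w] by (simp add: cum_weight_eq_real)
  then show ?thesis using cum_weight_real_nonneg[OF w, of s'] by simp
qed

lemma cum_weight_less_top:
  assumes w: "is_weight w" and "u < \<infinity>"
  shows "cum_weight w u < \<infinity>"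
proof -
  obtain r where r: "u = ennreal r" "r \<ge> 0" using assms(2) by (cases u) auto
  then show ?thesis
    using cum_weight_eq_real[OF w, of r] by (cases "r = 0") auto
qed

lemma cum_weight_top:
  assumes w: "is_weight w"
  shows "cum_weight w \<infinity> = (SUP n. cum_weight w (ennreal (real n)))"
proof -
  have [measurable]: "w \<in> borel_measurable borel" using weight_borel_measurable[OF w] .
  define g where "g n t = ennreal (w t) * indicator {0<..<real n} t" for n :: nat and t :: real
  have "(SUP n. cum_weight w (ennreal (real n))) = (SUP n. integral\<^sup>N lborel (g n))"
    unfolding g_def by (simp add: cum_weight_ennreal)
  also have "\<dots> = (\<integral>\<^sup>+ t. (SUP n. g n t) \<partial>lborel)"
  proof (rule nn_integral_monotone_convergence_SUP[symmetric])
    show "incseq g"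
      by (intro incseq_SucI le_funI) (auto simp: g_def indicator_def)
  qed (unfold g_def, measurable)
  also have "\<dots> = cum_weight w \<infinity>"
    unfolding cum_weight_def
  proof (intro nn_integral_cong)
    fix t :: real
    obtain n :: nat where "t < n" using reals_Archimedean2 by blast
    then have "g n t = ennreal (w t) * indicator {0<..} t"
      by (simp add: g_def indicator_def)
    moreover have "g m t \<le> ennreal (w t) * indicator {0<..} t" for m
      by (auto simp: g_def indicator_def)
    ultimately have "(SUP n. g n t) = ennreal (w t) * indicator {0<..} t"
      by (metis (mono_tags, lifting) SUP_upper2 UNIV_I antisym SUP_least)
    then show "(SUP n. g n t) = ennreal (w t) * indicator {t. 0 < t \<and> ennreal t < \<infinity>} t"
      by (simp add: indicator_def)
  qed
  finally show ?thesis ..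
qed

lemma emeasure_lborel_atLeast_top: "emeasure lborel {0::real..} = \<infinity>"
proof (rule ccontr)
  assume "emeasure lborel {0::real..} \<noteq> \<infinity>"
  then obtain r where r: "emeasure lborel {0::real..} = ennreal r" "r \<ge> 0"
    by (cases "emeasure lborel {0::real..}") auto
  obtain n :: nat where n: "r < n" using reals_Archimedean2 by blast
  have "emeasure lborel {0::real..<n} \<le> emeasure lborel {0::real..}"
    by (rule emeasure_mono) auto
  then show False using n r by (simp add: ennreal_le_iff)
qed

lemma emeasure_lborel_ennreal_below: "emeasure lborel {l. 0 \<le> l \<and> ennreal l < x} = x"
proof (cases x)
  case (real r)
  then have "{l. 0 \<le> l \<and> ennreal l < x} = {0..<r}"
    by (auto simp: ennreal_less_iff)
  then show ?thesis using real by simp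
next
  case top
  then have "{l. 0 \<le> l \<and> ennreal l < x} = {0..}" by auto
  then show ?thesis using top by (simp add: emeasure_lborel_atLeast_top)
qed

lemma Lambda_norm_layer_cake:
  assumes f: "f \<in> borel_measurable lebesgue" and [measurable]: "w \<in> borel_measurable borel"
  shows "Lambda_norm w f = (\<integral>\<^sup>+ l\<in>{0..}. cum_weight w (distrib_fun f (ennreal l)) \<partial>lborel)"
proof -
  define F where "F t l = indicator {l. 0 \<le> l \<and> ennreal l < rearr f t} l * (ennreal (w t) * indicator {0<..} t)"
    for t l :: real
  have "(\<integral>\<^sup>+ l. F t l \<partial>lborel) = rearr f t * ennreal (w t) * indicator {0<..} t" for t
  proof -
    have "{l::real. 0 \<le> l \<and> ennreal l < rearr f t} \<in> sets lborel" by measurable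
    then show ?thesis
      unfolding F_def by (subst nn_integral_multc) (simp_all add: emeasure_lborel_ennreal_below mult.assoc)
  qed
  then have "Lambda_norm w f = (\<integral>\<^sup>+ t. (\<integral>\<^sup>+ l. F t l \<partial>lborel) \<partial>lborel)"
    unfolding Lambda_norm_def by simp
  also have "\<dots> = (\<integral>\<^sup>+ l. (\<integral>\<^sup>+ t. F t l \<partial>lborel) \<partial>lborel)"
    by (rule lborel_pair.Fubini'[symmetric]) (unfold F_def, measurable)
  also have "\<dots> = (\<integral>\<^sup>+ l\<in>{0..}. cum_weight w (distrib_fun f (ennreal l)) \<partial>lborel)"
    unfolding cum_weight_def F_def
    by (intro nn_integral_cong) (auto simp: indicator_def rearr_less_iff[OF f] of_bool_conj ac_simps)
  finally show ?thesis .
qed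

context
  fixes E :: "'a::euclidean_space set" and a :: real
  assumes a: "a > 0" and E: "E \<in> sets lebesgue"
begin

lemma rearr_indicator:
  assumes "t \<ge> 0"
  shows "rearr (\<lambda>x. a * indicator E x) t = (if ennreal t < emeasure lebesgue E then ennreal a else 0)"
proof -
  let ?f = "\<lambda>x. a * indicator E x"
  have f: "?f \<in> borel_measurable lebesgue" using E by measurable
  have distrib: "distrib_fun ?f l = (if l < ennreal a then emeasure lebesgue E else 0)" for l
  proof -
    have "{x. l < ennreal \<bar>a * indicator E x\<bar>} = (if l < ennreal a then E else {})"
      using a by (auto simp: indicator_def)
    then show ?thesis unfolding distrib_fun_def by simp
  qed
  show ?thesis
  proof (cases "ennreal t < emeasure lebesgue E")
    case True
    have "rearr ?f t \<le> ennreal a"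
      unfolding rearr_def by (rule Inf_lower) (simp add: distrib)
    moreover have "y < rearr ?f t" if "y < ennreal a" for y
      using rearr_less_iff[OF f] True that by (simp add: distrib)
    ultimately show ?thesis using True by (metis dense_le order_antisym less_imp_le)
  next
    case False
    have "rearr ?f t \<le> 0"
      unfolding rearr_def by (rule Inf_lower) (use False a in \<open>simp add: distrib not_less\<close>)
    then show ?thesis using False by simp
  qed
qed

lemma max_rearr_indicator:
  assumes t: "t > 0" "ennreal t < emeasure lebesgue E"
  shows "max_rearr (\<lambda>x. a * indicator E x) t = ennreal a"
proof -
  have "(\<integral>\<^sup>+ s\<in>{0<..<t}. rearr (\<lambda>x. a * indicator E x) s \<partial>lborel) = (\<integral>\<^sup>+ s\<in>{0<..<t}. ennreal a \<partial>lborel)"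
  proof (intro nn_integral_cong)
    fix s
    show "rearr (\<lambda>x. a * indicator E x) s * indicator {0<..<t} s = ennreal a * indicator {0<..<t} s"
    proof (cases "s \<in> {0<..<t}")
      case True
      then have "ennreal s < emeasure lebesgue E"
        using t by (meson ennreal_lessI greaterThanLessThan_iff order.strict_trans)
      then show ?thesis using True rearr_indicator[of s] by simp
    qed simp
  qed
  also have "\<dots> = ennreal (a * t)"
    using t a by (simp add: nn_integral_cmult_indicator ennreal_mult)
  finally show ?thesis
    unfolding max_rearr_def using t a by (simp flip: ennreal_mult)
qed

lemma Gamma_norm_indicator:
  assumes "0 < \<alpha>" "\<alpha> < 1" and [measurable]: "w \<in> borel_measurable borel"
  shows "Gamma_norm \<alpha> w (\<lambda>x. a * indicator E x) = ennreal a * cum_weight w (emeasure lebesgue E)"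
proof -
  let ?f = "\<lambda>x. a * indicator E x"
  have aa: "epowr (ennreal a) \<alpha> * epowr (ennreal a) (1 - \<alpha>) = ennreal a"
    using a assms by (simp add: epowr_def ennreal_mult[symmetric] powr_add[symmetric])
  have "Gamma_norm \<alpha> w ?f
      = (\<integral>\<^sup>+ t. ennreal a * (ennreal (w t) * indicator {t. 0 < t \<and> ennreal t < emeasure lebesgue E} t) \<partial>lborel)"
    unfolding Gamma_norm_def
  proof (intro nn_integral_cong)
    fix t :: real
    show "epowr (rearr ?f t) \<alpha> * epowr (max_rearr ?f t) (1 - \<alpha>) * ennreal (w t) * indicator {0<..} t
        = ennreal a * (ennreal (w t) * indicator {t. 0 < t \<and> ennreal t < emeasure lebesgue E} t)"
    proof (cases "0 < t \<and> ennreal t < emeasure lebesgue E")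
      case True
      then show ?thesis using aa rearr_indicator[of t] max_rearr_indicator[of t] by (simp add: ac_simps)
    next
      case False
      then show ?thesis using rearr_indicator[of t] assms by (auto simp: epowr_def indicator_def)
    qed
  qed
  also have "\<dots> = ennreal a * cum_weight w (emeasure lebesgue E)"
    unfolding cum_weight_def by (rule nn_integral_cmult) measurable
  finally show ?thesis .
qed

lemma indicator_in_Gamma_space:
  assumes "is_weight w" "0 < \<alpha>" "\<alpha> < 1" and "emeasure lebesgue E < \<infinity>"
  shows "(\<lambda>x. a * indicator E x) \<in> Gamma_space \<alpha> w"
  using assms E cum_weight_less_top[OF assms(1,4)]
  unfolding Gamma_space_def
  by (auto simp: Gamma_norm_indicator weight_borel_measurable ennreal_mult_less_top)

end

section \<open>The \<open>K\<close>-functional of \<open>(L\<^sup>1, L\<^sup>\<infinity>)\<close>\<close>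

lemma sigma_finite_lebesgue: "sigma_finite_measure (lebesgue :: 'a::euclidean_space measure)"
proof -
  obtain A :: "'a set set" where A: "countable A" "A \<subseteq> sets lborel" "\<Union>A = space lborel"
      "\<forall>a\<in>A. emeasure lborel a \<noteq> \<infinity>"
    using sigma_finite_measure.sigma_finite_countable[OF sigma_finite_lborel] by blast
  then show ?thesis
    by unfold_locales (intro exI[of _ A], auto simp: subset_eq)
qed

interpretation lebesgue_lborel: pair_sigma_finite "lebesgue :: 'a::euclidean_space measure" lborel
  by (intro pair_sigma_finite.intro sigma_finite_lebesgue sigma_finite_lborel)

text \<open>\<open>K_functional t f = \<integral>\<^sub>0\<^sup>\<infinity> min (\<lambda>\<^sub>f(l)) t dl\<close> is \<open>\<integral>\<^sub>0\<^sup>t f\<^sup>*\<close>, the \<open>K\<close>-functional of \<open>f\<close> for the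
  couple \<open>(L\<^sup>1, L\<^sup>\<infinity>)\<close>. It is sublinear because it equals the minimum over \<open>c \<ge> 0\<close> of
  \<open>c t + \<integral> (\<bar>f\<bar> - c)\<^sub>+\<close>, attained at \<open>c = f\<^sup>*(t)\<close>.\<close>

definition K_functional :: "real \<Rightarrow> ('a::euclidean_space \<Rightarrow> real) \<Rightarrow> ennreal" where
  "K_functional t f = (\<integral>\<^sup>+ l\<in>{0..}. min (distrib_fun f (ennreal l)) (ennreal t) \<partial>lborel)"

lemma nn_integral_distrib_fun_above:
  fixes f :: "'a::euclidean_space \<Rightarrow> real"
  assumes f[measurable]: "f \<in> borel_measurable lebesgue" and c: "c \<ge> 0"
  shows "(\<integral>\<^sup>+ l\<in>{c<..}. distrib_fun f (ennreal l) \<partial>lborel) = (\<integral>\<^sup>+ x. ennreal (max 0 (\<bar>f x\<bar> - c)) \<partial>lebesgue)"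
proof -
  define G :: "'a \<Rightarrow> real \<Rightarrow> ennreal" where "G x l = indicator {c<..} l * indicator {l. l < \<bar>f x\<bar>} l" for x l
  have "distrib_fun f (ennreal l) * indicator {c<..} l = (\<integral>\<^sup>+ x. G x l \<partial>lebesgue)" for l
  proof (cases "c < l")
    case True
    then have "{x. ennreal l < ennreal \<bar>f x\<bar>} = {x \<in> space lebesgue. l < \<bar>f x\<bar>}"
      using c by (auto simp: ennreal_less_iff)
    moreover have "{x \<in> space lebesgue. l < \<bar>f x\<bar>} \<in> sets lebesgue" by measurable
    moreover have "(\<integral>\<^sup>+ x. G x l \<partial>lebesgue) = (\<integral>\<^sup>+ x. indicator {x \<in> space lebesgue. l < \<bar>f x\<bar>} x \<partial>lebesgue)"
      unfolding G_def using True by (intro nn_integral_cong) (auto simp: indicator_def)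
    ultimately show ?thesis
      unfolding distrib_fun_def using True by (simp del: emeasure_completion)
  qed (simp add: G_def)
  then have "(\<integral>\<^sup>+ l\<in>{c<..}. distrib_fun f (ennreal l) \<partial>lborel) = (\<integral>\<^sup>+ l. (\<integral>\<^sup>+ x. G x l \<partial>lebesgue) \<partial>lborel)"
    by simp
  also have "\<dots> = (\<integral>\<^sup>+ x. (\<integral>\<^sup>+ l. G x l \<partial>lborel) \<partial>lebesgue)"
    by (rule lebesgue_lborel.Fubini') (unfold G_def, measurable)
  also have "\<dots> = (\<integral>\<^sup>+ x. ennreal (max 0 (\<bar>f x\<bar> - c)) \<partial>lebesgue)"
  proof (intro nn_integral_cong)
    fix x
    have "(\<integral>\<^sup>+ l. G x l \<partial>lborel) = (\<integral>\<^sup>+ l. indicator {c<..<\<bar>f x\<bar>} l \<partial>lborel)"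
      unfolding G_def by (intro nn_integral_cong) (auto simp: indicator_def)
    then show "(\<integral>\<^sup>+ l. G x l \<partial>lborel) = ennreal (max 0 (\<bar>f x\<bar> - c))"
      by (cases "c \<le> \<bar>f x\<bar>") (auto simp: max_def)
  qed
  finally show ?thesis .
qed

lemma K_functional_le:
  fixes f :: "'a::euclidean_space \<Rightarrow> real"
  assumes f[measurable]: "f \<in> borel_measurable lebesgue" and "c \<ge> 0" "t \<ge> 0"
  shows "K_functional t f \<le> ennreal (c * t) + (\<integral>\<^sup>+ x. ennreal (max 0 (\<bar>f x\<bar> - c)) \<partial>lebesgue)"
proof -
  have "K_functional t f
      \<le> (\<integral>\<^sup>+ l. ennreal t * indicator {0..c} l + distrib_fun f (ennreal l) * indicator {c<..} l \<partial>lborel)"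
    unfolding K_functional_def by (intro nn_integral_mono) (auto simp: indicator_def)
  also have "\<dots> = ennreal (c * t) + (\<integral>\<^sup>+ l\<in>{c<..}. distrib_fun f (ennreal l) \<partial>lborel)"
    using assms by (subst nn_integral_add) (auto simp: nn_integral_cmult_indicator ennreal_mult mult.commute)
  finally show ?thesis using nn_integral_distrib_fun_above[OF f \<open>c \<ge> 0\<close>] by simp
qed

lemma K_functional_rearr_top:
  assumes f: "f \<in> borel_measurable lebesgue" and "t > 0" and "rearr f t = \<infinity>"
  shows "K_functional t f = \<infinity>"
proof -
  have "ennreal t < distrib_fun f (ennreal l)" for l
    using assms rearr_less_iff[OF f, of "ennreal l" t] by simp
  then have "K_functional t f = (\<integral>\<^sup>+ l\<in>{0::real..}. ennreal t \<partial>lborel)"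
    unfolding K_functional_def by (intro nn_integral_cong) (simp add: min_absorb2 less_imp_le)
  also have "\<dots> = \<infinity>"
    using assms by (simp add: nn_integral_cmult_indicator emeasure_lborel_atLeast_top ennreal_mult_top)
  finally show ?thesis .
qed

lemma K_functional_ge:
  fixes f :: "'a::euclidean_space \<Rightarrow> real"
  assumes f[measurable]: "f \<in> borel_measurable lebesgue" and t: "t > 0"
    and c: "rearr f t = ennreal c" "c \<ge> 0"
  shows "ennreal (c * t) + (\<integral>\<^sup>+ x. ennreal (max 0 (\<bar>f x\<bar> - c)) \<partial>lebesgue) \<le> K_functional t f"
proof -
  have "ennreal t < distrib_fun f (ennreal l)" if "0 \<le> l" "l < c" for l
    using that c rearr_less_iff[OF f, of "ennreal l" t] by (simp add: ennreal_less_iff)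
  moreover have "distrib_fun f (ennreal l) \<le> ennreal t" if "c < l" for l
    using that c rearr_less_iff[OF f, of "ennreal l" t] by (simp add: ennreal_less_iff not_less)
  ultimately have "(\<integral>\<^sup>+ l. ennreal t * indicator {0..<c} l + distrib_fun f (ennreal l) * indicator {c<..} l \<partial>lborel)
      \<le> K_functional t f"
    unfolding K_functional_def using c
    by (intro nn_integral_mono) (auto simp: indicator_def less_imp_le)
  moreover have "(\<integral>\<^sup>+ l. ennreal t * indicator {0..<c} l + distrib_fun f (ennreal l) * indicator {c<..} l \<partial>lborel)
      = ennreal (c * t) + (\<integral>\<^sup>+ l\<in>{c<..}. distrib_fun f (ennreal l) \<partial>lborel)"
    using c t by (subst nn_integral_add) (auto simp: nn_integral_cmult_indicator ennreal_mult mult.commute)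
  ultimately show ?thesis using nn_integral_distrib_fun_above[OF f c(2)] by simp
qed

lemma excess_integral_add_le:
  assumes [measurable]: "f \<in> borel_measurable M" "g \<in> borel_measurable M"
  shows "(\<integral>\<^sup>+ x. ennreal (max 0 (\<bar>f x + g x\<bar> - (c1 + c2))) \<partial>M)
    \<le> (\<integral>\<^sup>+ x. ennreal (max 0 (\<bar>f x\<bar> - c1)) \<partial>M) + (\<integral>\<^sup>+ x. ennreal (max 0 (\<bar>g x\<bar> - c2)) \<partial>M)"
proof -
  have "max 0 (\<bar>f x + g x\<bar> - (c1 + c2)) \<le> max 0 (\<bar>f x\<bar> - c1) + max 0 (\<bar>g x\<bar> - c2)" for x
    using abs_triangle_ineq[of "f x" "g x"] by linarith
  then have "(\<integral>\<^sup>+ x. ennreal (max 0 (\<bar>f x + g x\<bar> - (c1 + c2))) \<partial>M)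
      \<le> (\<integral>\<^sup>+ x. ennreal (max 0 (\<bar>f x\<bar> - c1)) + ennreal (max 0 (\<bar>g x\<bar> - c2)) \<partial>M)"
    by (intro nn_integral_mono) (simp add: ennreal_plus[symmetric] ennreal_leI del: ennreal_plus)
  also have "\<dots> = (\<integral>\<^sup>+ x. ennreal (max 0 (\<bar>f x\<bar> - c1)) \<partial>M) + (\<integral>\<^sup>+ x. ennreal (max 0 (\<bar>g x\<bar> - c2)) \<partial>M)"
    by (rule nn_integral_add) auto
  finally show ?thesis .
qed

lemma K_functional_add_le:
  fixes f g :: "'a::euclidean_space \<Rightarrow> real"
  assumes f[measurable]: "f \<in> borel_measurable lebesgue" and g[measurable]: "g \<in> borel_measurable lebesgue"
    and "t \<ge> 0"
  shows "K_functional t (\<lambda>x. f x + g x) \<le> K_functional t f + K_functional t g"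
proof (cases "t = 0")
  case True
  then show ?thesis by (simp add: K_functional_def)
next
  case False
  then have t: "t > 0" using assms by simp
  show ?thesis
  proof (cases "rearr f t = \<infinity> \<or> rearr g t = \<infinity>")
    case True
    then show ?thesis using K_functional_rearr_top[OF f t] K_functional_rearr_top[OF g t] by auto
  next
    case False
    then obtain c1 c2 where c1: "rearr f t = ennreal c1" "c1 \<ge> 0" and c2: "rearr g t = ennreal c2" "c2 \<ge> 0"
      by (cases "rearr f t"; cases "rearr g t") auto
    have "K_functional t (\<lambda>x. f x + g x)
        \<le> ennreal ((c1 + c2) * t) + (\<integral>\<^sup>+ x. ennreal (max 0 (\<bar>f x + g x\<bar> - (c1 + c2))) \<partial>lebesgue)"
      by (rule K_functional_le) (use c1 c2 t in auto)
    also have "\<dots> \<le> ennreal (c1 * t) + ennreal (c2 * t)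
        + ((\<integral>\<^sup>+ x. ennreal (max 0 (\<bar>f x\<bar> - c1)) \<partial>lebesgue) + (\<integral>\<^sup>+ x. ennreal (max 0 (\<bar>g x\<bar> - c2)) \<partial>lebesgue))"
      unfolding distrib_right using c1 c2 t
      by (subst ennreal_plus) (auto intro: add_mono excess_integral_add_le f g)
    also have "\<dots> = (ennreal (c1 * t) + (\<integral>\<^sup>+ x. ennreal (max 0 (\<bar>f x\<bar> - c1)) \<partial>lebesgue))
        + (ennreal (c2 * t) + (\<integral>\<^sup>+ x. ennreal (max 0 (\<bar>g x\<bar> - c2)) \<partial>lebesgue))"
      by (simp add: ac_simps)
    also have "\<dots> \<le> K_functional t f + K_functional t g"
      by (intro add_mono K_functional_ge f g t c1 c2)
    finally show ?thesis .
  qed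
qed

lemma K_functional_scale:
  fixes f :: "'a::euclidean_space \<Rightarrow> real"
  assumes f[measurable]: "f \<in> borel_measurable lebesgue"
  shows "K_functional t (\<lambda>x. a * f x) = ennreal \<bar>a\<bar> * K_functional t f"
proof (cases "a = 0")
  case True
  then show ?thesis unfolding K_functional_def distrib_fun_def by simp
next
  case False
  have [measurable]: "(\<lambda>l. distrib_fun (\<lambda>x. a * f x) (ennreal l)) \<in> borel_measurable borel"
    by (rule distrib_fun_measurable) measurable
  have distrib_scale: "distrib_fun (\<lambda>x. a * f x) (ennreal (\<bar>a\<bar> * l)) = distrib_fun f (ennreal l)"
    if "l \<ge> 0" for l
  proof -
    have "{x. ennreal (\<bar>a\<bar> * l) < ennreal \<bar>a * f x\<bar>} = {x. ennreal l < ennreal \<bar>f x\<bar>}"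
      using that False by (auto simp: ennreal_less_iff abs_mult)
    then show ?thesis unfolding distrib_fun_def by simp
  qed
  have "K_functional t (\<lambda>x. a * f x) = ennreal \<bar>a\<bar> *
      (\<integral>\<^sup>+ l. min (distrib_fun (\<lambda>x. a * f x) (ennreal (0 + \<bar>a\<bar> * l))) (ennreal t) * indicator {0..} (0 + \<bar>a\<bar> * l) \<partial>lborel)"
  proof -
    have "(\<lambda>l. min (distrib_fun (\<lambda>x. a * f x) (ennreal l)) (ennreal t) * indicator {0..} l) \<in> borel_measurable borel"
      by measurable
    from nn_integral_real_affine[OF this, of "\<bar>a\<bar>" 0] False show ?thesis
      unfolding K_functional_def by simp
  qed
  also have "(\<integral>\<^sup>+ l. min (distrib_fun (\<lambda>x. a * f x) (ennreal (0 + \<bar>a\<bar> * l))) (ennreal t) * indicator {0..} (0 + \<bar>a\<bar> * l) \<partial>lborel)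
      = K_functional t f"
    unfolding K_functional_def using False
    by (intro nn_integral_cong) (auto simp: indicator_def distrib_scale zero_le_mult_iff)
  finally show ?thesis .
qed

section \<open>Concave regularisation of a quasi-concave function\<close>

text \<open>An infimum of the affine functions \<open>u \<mapsto> W s + u W(s)/s\<close>, hence concave; by \<open>concave_reg_le_twice\<close>
  and \<open>le_concave_reg\<close> below it is equivalent to \<open>W\<close> when \<open>W(t)/t\<close> is quasi-decreasing.\<close>

definition concave_reg :: "(real \<Rightarrow> real) \<Rightarrow> real \<Rightarrow> real" where
  "concave_reg W u = (INF s\<in>{0<..}. W s * (1 + u / s))"

text \<open>The piecewise linear interpolant of \<open>concave_reg W\<close> with nodes \<open>0, h, \<dots>, m h\<close>, where the
  value at the node \<open>0\<close> is taken to be \<open>0\<close>, extended by a constant beyond \<open>m h\<close>.\<close>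

definition node_value :: "(real \<Rightarrow> real) \<Rightarrow> real \<Rightarrow> nat \<Rightarrow> real" where
  "node_value W h j = (if j = 0 then 0 else concave_reg W (j * h))"

definition node_slope :: "(real \<Rightarrow> real) \<Rightarrow> real \<Rightarrow> nat \<Rightarrow> real" where
  "node_slope W h i = (node_value W h i - node_value W h (i - 1)) / h"

definition concave_interp :: "(real \<Rightarrow> real) \<Rightarrow> real \<Rightarrow> nat \<Rightarrow> real \<Rightarrow> real" where
  "concave_interp W h m r = (\<Sum>i\<in>{1..m}. node_slope W h i * (min r (i * h) - min r ((i - 1) * h)))"

definition hat_coeff :: "(real \<Rightarrow> real) \<Rightarrow> real \<Rightarrow> nat \<Rightarrow> nat \<Rightarrow> real" where
  "hat_coeff W h m i = node_slope W h i - (if i < m then node_slope W h (i + 1) else 0)"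

lemma sum_by_parts:
  fixes s a :: "nat \<Rightarrow> real"
  assumes "a 0 = 0"
  shows "(\<Sum>i\<in>{1..m}. s i * (a i - a (i - 1))) = (\<Sum>i\<in>{1..m}. (s i - (if i < m then s (i + 1) else 0)) * a i)"
proof (induction m)
  case (Suc m)
  have "(\<Sum>i\<in>{1..Suc m}. (s i - (if i < Suc m then s (i + 1) else 0)) * a i)
      = (\<Sum>i\<in>{1..m}. (s i - s (i + 1)) * a i) + s (Suc m) * a (Suc m)"
    by (simp add: sum.cl_ivl_Suc)
  moreover have "(\<Sum>i\<in>{1..m}. (s i - (if i < m then s (i + 1) else 0)) * a i)
      = (\<Sum>i\<in>{1..m}. (s i - s (i + 1)) * a i) + s (m + 1) * a m"
  proof (cases "m = 0")
    case False
    have "(\<Sum>i\<in>{1..m}. (s i - (if i < m then s (i + 1) else 0)) * a i)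
        = (\<Sum>i\<in>{1..m}. (s i - s (i + 1)) * a i + (if i = m then s (i + 1) * a i else 0))"
      by (intro sum.cong) (auto simp: algebra_simps)
    then show ?thesis using False by (simp add: sum.distrib)
  qed (use assms in simp)
  ultimately show ?case using Suc.IH by (simp add: sum.cl_ivl_Suc algebra_simps)
qed simp

locale quasi_concave =
  fixes W :: "real \<Rightarrow> real" and C :: real
  assumes nonneg: "\<And>s. W s \<ge> 0"
    and mono: "\<And>s s'. 0 \<le> s \<Longrightarrow> s \<le> s' \<Longrightarrow> W s \<le> W s'"
    and quasi_decreasing: "\<And>r s. 0 < r \<Longrightarrow> r < s \<Longrightarrow> W s / s \<le> C * (W r / r)"
    and C_ge_1: "C \<ge> 1"
begin

lemma concave_reg_le:
  assumes "u \<ge> 0" "s > 0"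
  shows "concave_reg W u \<le> W s * (1 + u / s)"
proof -
  have "bdd_below ((\<lambda>s. W s * (1 + u / s)) ` {0<..})"
    using assms(1) nonneg by (intro bdd_belowI[of _ 0]) auto
  then show ?thesis unfolding concave_reg_def by (rule cINF_lower) (use assms in auto)
qed

lemma concave_reg_greatest: "(\<And>s. s > 0 \<Longrightarrow> y \<le> W s * (1 + u / s)) \<Longrightarrow> y \<le> concave_reg W u"
  unfolding concave_reg_def by (rule cINF_greatest) auto

lemma concave_reg_nonneg: "u \<ge> 0 \<Longrightarrow> concave_reg W u \<ge> 0"
  by (rule concave_reg_greatest) (use nonneg in auto)

lemma concave_reg_mono:
  assumes "0 \<le> u" "u \<le> u'"
  shows "concave_reg W u \<le> concave_reg W u'"
proof (rule concave_reg_greatest)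
  fix s :: real assume "s > 0"
  then have "concave_reg W u \<le> W s * (1 + u / s)" using assms concave_reg_le by auto
  also have "\<dots> \<le> W s * (1 + u' / s)"
    using assms \<open>s > 0\<close> nonneg by (intro mult_left_mono) (auto simp: divide_right_mono)
  finally show "concave_reg W u \<le> W s * (1 + u' / s)" .
qed

lemma concave_reg_concave:
  assumes "0 \<le> a" "a \<le> x" "x \<le> b" "a < b"
  shows "concave_reg W a + (concave_reg W b - concave_reg W a) * (x - a) / (b - a) \<le> concave_reg W x"
proof (rule concave_reg_greatest)
  fix s :: real assume s: "s > 0"
  define \<theta> where "\<theta> = (x - a) / (b - a)"
  have \<theta>: "0 \<le> \<theta>" "\<theta> \<le> 1" "\<theta> * (b - a) = x - a"
    using assms unfolding \<theta>_def by auto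
  have "(concave_reg W b - concave_reg W a) * (x - a) / (b - a) = \<theta> * (concave_reg W b - concave_reg W a)"
    by (simp add: \<theta>_def ac_simps)
  then have "concave_reg W a + (concave_reg W b - concave_reg W a) * (x - a) / (b - a)
      = (1 - \<theta>) * concave_reg W a + \<theta> * concave_reg W b"
    by (simp add: algebra_simps)
  also have "\<dots> \<le> (1 - \<theta>) * (W s * (1 + a / s)) + \<theta> * (W s * (1 + b / s))"
    using \<theta> s assms by (intro add_mono mult_left_mono concave_reg_le) auto
  also have "\<dots> = W s * (1 + ((1 - \<theta>) * a + \<theta> * b) / s)"
    using s by (simp add: field_simps)
  also have "(1 - \<theta>) * a + \<theta> * b = x"
    using \<theta>(3) by (simp add: algebra_simps)
  finally show "concave_reg W a + (concave_reg W b - concave_reg W a) * (x - a) / (b - a) \<le> W s * (1 + x / s)" .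
qed

lemma concave_reg_ge_scaled:
  assumes "0 \<le> x" "x \<le> b" "0 < b"
  shows "concave_reg W b * x / b \<le> concave_reg W x"
proof -
  have "concave_reg W b * x / b
      = concave_reg W 0 + (concave_reg W b - concave_reg W 0) * (x - 0) / (b - 0) - concave_reg W 0 * (1 - x / b)"
    using assms by (simp add: field_simps)
  moreover have "concave_reg W 0 * (1 - x / b) \<ge> 0"
    using concave_reg_nonneg[of 0] assms by simp
  moreover have "concave_reg W 0 + (concave_reg W b - concave_reg W 0) * (x - 0) / (b - 0) \<le> concave_reg W x"
    using concave_reg_concave[of 0 x b] assms by simp
  ultimately show ?thesis by linarith
qed

lemma concave_reg_le_twice: "u > 0 \<Longrightarrow> concave_reg W u \<le> 2 * W u"
  using concave_reg_le[of u u] by simp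

lemma le_concave_reg:
  assumes u: "u > 0"
  shows "W u \<le> C * concave_reg W u"
proof -
  have "W u / C \<le> concave_reg W u"
  proof (rule concave_reg_greatest)
    fix s :: real assume s: "s > 0"
    show "W u / C \<le> W s * (1 + u / s)"
    proof (cases "u \<le> s")
      case True
      have "W u * 1 \<le> W u * C" using C_ge_1 nonneg[of u] by (intro mult_left_mono) auto
      then have "W u / C \<le> W u" using C_ge_1 by (simp add: divide_le_eq)
      also have "\<dots> \<le> W s" using mono[of u s] True u by simp
      also have "\<dots> \<le> W s * (1 + u / s)" using u s nonneg[of s] by (simp add: field_simps)
      finally show ?thesis .
    next
      case False
      then have "W u / u \<le> C * (W s / s)" using quasi_decreasing[of s u] s by simp
      then have "W u / C \<le> u * (W s / s)" using u C_ge_1 by (simp add: field_simps)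
      also have "\<dots> \<le> W s * (1 + u / s)" using nonneg[of s] s by (simp add: field_simps)
      finally show ?thesis .
    qed
  qed
  then show ?thesis using C_ge_1 by (simp add: field_simps)
qed

context
  fixes h :: real
  assumes h: "h > 0"
begin

lemma node_value_Suc: "node_value W h (Suc j) = concave_reg W (Suc j * h)"
  unfolding node_value_def by simp

lemma node_slope_nonneg:
  assumes "i \<ge> 1" shows "node_slope W h i \<ge> 0"
proof -
  have "node_value W h (i - 1) \<le> node_value W h i"
    using assms h concave_reg_nonneg concave_reg_mono unfolding node_value_def by auto
  then show ?thesis unfolding node_slope_def using h by simp
qed

lemma node_slope_antimono:
  assumes i: "i \<ge> 1" shows "node_slope W h (i + 1) \<le> node_slope W h i"
proof (cases "i = 1")
  case True
  have "concave_reg W (2 * h) * h / (2 * h) \<le> concave_reg W h"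
    using concave_reg_ge_scaled[of h "2 * h"] h by simp
  then show ?thesis using True h unfolding node_slope_def node_value_def by (simp add: field_simps)
next
  case False
  have i1: "real (i - 1) = real i - 1" using i by (simp add: of_nat_diff)
  let ?a = "(real i - 1) * h" and ?x = "real i * h" and ?b = "(real i + 1) * h"
  have c: "concave_reg W ?a + (concave_reg W ?b - concave_reg W ?a) * (?x - ?a) / (?b - ?a) \<le> concave_reg W ?x"
    using h i by (intro concave_reg_concave) (auto simp: algebra_simps)
  have d: "?x - ?a = h" "?b - ?a = 2 * h" by (simp_all add: algebra_simps)
  have "concave_reg W ?a + (concave_reg W ?b - concave_reg W ?a) / 2 \<le> concave_reg W ?x"
    using c h unfolding d by simp
  then have "concave_reg W ?b - concave_reg W ?x \<le> concave_reg W ?x - concave_reg W ?a"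
    by (simp add: field_simps)
  then show ?thesis
    using False i h i1 unfolding node_slope_def node_value_def by (simp add: divide_right_mono add.commute)
qed

lemma hat_coeff_nonneg: "i \<ge> 1 \<Longrightarrow> hat_coeff W h m i \<ge> 0"
  unfolding hat_coeff_def using node_slope_antimono node_slope_nonneg by auto

lemma concave_interp_eq_hat_sum:
  "r \<ge> 0 \<Longrightarrow> concave_interp W h m r = (\<Sum>i\<in>{1..m}. hat_coeff W h m i * min r (i * h))"
  unfolding concave_interp_def hat_coeff_def
  using sum_by_parts[of "\<lambda>i. min r (i * h)" "node_slope W h" m] by (simp add: of_nat_diff)

lemma concave_interp_Suc:
  "concave_interp W h (Suc m) r = concave_interp W h m r + node_slope W h (Suc m) * (min r (Suc m * h) - min r (m * h))"
  unfolding concave_interp_def by (simp add: sum.cl_ivl_Suc)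

lemma concave_interp_above: "r \<ge> m * h \<Longrightarrow> concave_interp W h m r = node_value W h m"
proof (induction m)
  case (Suc m)
  then have "r \<ge> m * h" using h by (simp add: algebra_simps)
  moreover have "node_slope W h (Suc m) * h = node_value W h (Suc m) - node_value W h m"
    using h by (simp add: node_slope_def)
  ultimately show ?case
    using Suc by (simp add: concave_interp_Suc min_absorb2 algebra_simps)
qed (simp add: concave_interp_def node_value_def)

lemma concave_interp_below: "r \<le> m * h \<Longrightarrow> concave_interp W h (Suc m) r = concave_interp W h m r"
  using h by (simp add: concave_interp_Suc min_absorb1 algebra_simps)

lemma concave_interp_cell:
  assumes "m * h \<le> r" "r \<le> Suc m * h"
  shows "concave_interp W h (Suc m) r = node_value W h m + (concave_reg W (Suc m * h) - node_value W h m) * (r - m * h) / h"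
  using assms h by (simp add: concave_interp_Suc concave_interp_above node_slope_def node_value_Suc min_absorb1)

lemma concave_interp_le_concave_reg: "r \<ge> 0 \<Longrightarrow> concave_interp W h m r \<le> concave_reg W r"
proof (induction m)
  case 0
  then show ?case by (simp add: concave_interp_def concave_reg_nonneg)
next
  case (Suc m)
  consider "r \<le> m * h" | "m * h \<le> r" "r \<le> Suc m * h" | "Suc m * h \<le> r" by linarith
  then show ?case
  proof cases
    case 1
    then show ?thesis using Suc by (simp add: concave_interp_below)
  next
    case 2
    show ?thesis
    proof (cases "m = 0")
      case True
      then show ?thesis
        using 2 Suc.prems h concave_reg_ge_scaled[of r h] by (simp add: concave_interp_cell node_value_def)
    next
      case False
      have "concave_reg W (m * h) + (concave_reg W (Suc m * h) - concave_reg W (m * h)) * (r - m * h) / (Suc m * h - m * h)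
          \<le> concave_reg W r"
        using 2 h by (intro concave_reg_concave) (auto simp: algebra_simps)
      then show ?thesis using 2 False h by (simp add: concave_interp_cell node_value_def algebra_simps)
    qed
  next
    case 3
    then show ?thesis
      using h by (simp add: concave_interp_above node_value_Suc concave_reg_mono del: of_nat_Suc)
  qed
qed

text \<open>On \<open>[m h, (m + 1) h]\<close> the interpolant is at least \<open>V(m h)\<close>, and \<open>V((m + 1) h) \<le> 2 V(m h)\<close>
  by concavity.\<close>

lemma concave_reg_le_twice_interp:
  "h \<le> r \<Longrightarrow> r \<le> m * h \<Longrightarrow> concave_reg W r \<le> 2 * concave_interp W h m r"
proof (induction m)
  case (Suc m)
  show ?case
  proof (cases "r \<le> m * h")
    case True
    then show ?thesis using Suc by (simp add: concave_interp_below)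
  next
    case False
    show ?thesis
    proof (cases "m = 0")
      case True
      then have "r = h" using False Suc.prems by simp
      then show ?thesis
        using True h concave_reg_nonneg[of h] by (simp add: concave_interp_cell node_value_def)
    next
      case m: False
      have "node_value W h m \<le> concave_interp W h (Suc m) r"
        using False Suc.prems h node_slope_nonneg[of "Suc m"]
        by (simp add: concave_interp_Suc concave_interp_above min_absorb1 min_absorb2)
      moreover have "concave_reg W (Suc m * h) * (1 / 2) \<le> concave_reg W (m * h)"
      proof -
        have "concave_reg W (Suc m * h) * (1 / 2) \<le> concave_reg W (Suc m * h) * (m / Suc m)"
          using m concave_reg_nonneg[of "Suc m * h"] h by (intro mult_left_mono) (auto simp: field_simps)
        also have "\<dots> = concave_reg W (Suc m * h) * (m * h) / (Suc m * h)"
          using h by simp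
        also have "\<dots> \<le> concave_reg W (m * h)"
          using h by (intro concave_reg_ge_scaled) auto
        finally show ?thesis .
      qed
      moreover have "concave_reg W r \<le> concave_reg W (Suc m * h)"
        using Suc.prems h by (intro concave_reg_mono) auto
      ultimately show ?thesis using m by (simp add: node_value_def)
    qed
  qed
qed (use h in simp)

end

end

section \<open>An equivalent norm on \<open>\<Lambda>\<^sup>1(w)\<close> for \<open>w \<in> R\<^sub>1\<close>\<close>

lemma quasi_concave_cum_weight:
  assumes w: "is_weight w" and "R1 w"
  obtains C where "quasi_concave (cum_weight_real w) C"
proof -
  obtain C where C: "\<And>r s. 0 < r \<Longrightarrow> r < s \<Longrightarrow> (1 / s) * cum_weight_real w s \<le> (C / r) * cum_weight_real w r"
    using \<open>R1 w\<close> unfolding R1_def cum_weight_real_def by blast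
  have "quasi_concave (cum_weight_real w) (max C 1)"
  proof
    fix r s :: real assume rs: "0 < r" "r < s"
    have "cum_weight_real w s / s \<le> C * (cum_weight_real w r / r)"
      using C[OF rs] by simp
    also have "\<dots> \<le> max C 1 * (cum_weight_real w r / r)"
      using cum_weight_real_nonneg[OF w, of r] rs by (intro mult_right_mono) auto
    finally show "cum_weight_real w s / s \<le> max C 1 * (cum_weight_real w r / r)" .
  qed (use cum_weight_real_nonneg[OF w] cum_weight_real_mono[OF w] in auto)
  then show ?thesis by (rule that)
qed

text \<open>The \<open>n\<close>-th approximation uses the nodes \<open>i/(n + 1)\<close>, \<open>1 \<le> i \<le> (n + 1)\<^sup>2\<close>: the mesh tends to \<open>0\<close>
  and the last node \<open>n + 1\<close> to \<open>\<infinity>\<close>.\<close>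

definition mesh :: "nat \<Rightarrow> real" where "mesh n = 1 / Suc n"

definition num_nodes :: "nat \<Rightarrow> nat" where "num_nodes n = (Suc n)\<^sup>2"

lemma mesh_pos: "mesh n > 0"
  unfolding mesh_def by simp

lemma num_nodes_mesh: "num_nodes n * mesh n = Suc n"
proof -
  have "real (num_nodes n) = real (Suc n) * real (Suc n)"
    unfolding num_nodes_def by (simp only: power2_eq_square of_nat_mult)
  then show ?thesis unfolding mesh_def by simp
qed

definition hat_interp :: "(real \<Rightarrow> real) \<Rightarrow> nat \<Rightarrow> ennreal \<Rightarrow> ennreal" where
  "hat_interp w n u = (\<Sum>i\<in>{1..num_nodes n}.
      ennreal (hat_coeff (cum_weight_real w) (mesh n) (num_nodes n) i) * min u (ennreal (i * mesh n)))"

text \<open>A positive combination of \<open>K\<close>-functionals, hence sublinear in \<open>f\<close>; by the layer-cake formula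
  it equals \<open>\<integral>\<^sub>0\<^sup>\<infinity> hat_interp w n (\<lambda>\<^sub>f(l)) dl\<close>.\<close>

definition lorentz_approx :: "(real \<Rightarrow> real) \<Rightarrow> nat \<Rightarrow> ('a::euclidean_space \<Rightarrow> real) \<Rightarrow> ennreal" where
  "lorentz_approx w n f = (\<Sum>i\<in>{1..num_nodes n}.
      ennreal (hat_coeff (cum_weight_real w) (mesh n) (num_nodes n) i) * K_functional (i * mesh n) f)"

lemma hat_interp_mono: "u \<le> v \<Longrightarrow> hat_interp w n u \<le> hat_interp w n v"
  unfolding hat_interp_def by (intro sum_mono mult_left_mono min.mono) auto

lemma lorentz_approx_layer_cake:
  fixes f :: "'a::euclidean_space \<Rightarrow> real"
  assumes f[measurable]: "f \<in> borel_measurable lebesgue"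
  shows "lorentz_approx w n f = (\<integral>\<^sup>+ l\<in>{0..}. hat_interp w n (distrib_fun f (ennreal l)) \<partial>lborel)"
proof -
  let ?c = "\<lambda>i. ennreal (hat_coeff (cum_weight_real w) (mesh n) (num_nodes n) i)"
  have "(\<integral>\<^sup>+ l\<in>{0..}. hat_interp w n (distrib_fun f (ennreal l)) \<partial>lborel)
     = (\<integral>\<^sup>+ l. (\<Sum>i\<in>{1..num_nodes n}. ?c i * (min (distrib_fun f (ennreal l)) (ennreal (i * mesh n)) * indicator {0..} l)) \<partial>lborel)"
    unfolding hat_interp_def sum_distrib_right by (simp add: mult.assoc)
  also have "\<dots> = (\<Sum>i\<in>{1..num_nodes n}. (\<integral>\<^sup>+ l. ?c i * (min (distrib_fun f (ennreal l)) (ennreal (i * mesh n)) * indicator {0..} l) \<partial>lborel))"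
    by (rule nn_integral_sum) measurable
  also have "\<dots> = lorentz_approx w n f"
    unfolding lorentz_approx_def K_functional_def by (intro sum.cong refl nn_integral_cmult) measurable
  finally show ?thesis by simp
qed

lemma lorentz_approx_add_le:
  fixes f g :: "'a::euclidean_space \<Rightarrow> real"
  assumes "f \<in> borel_measurable lebesgue" "g \<in> borel_measurable lebesgue"
  shows "lorentz_approx w n (\<lambda>x. f x + g x) \<le> lorentz_approx w n f + lorentz_approx w n g"
  unfolding lorentz_approx_def sum.distrib[symmetric] distrib_left[symmetric]
  by (intro sum_mono mult_left_mono K_functional_add_le[OF assms]) (use mesh_pos[of n] in auto)

lemma lorentz_approx_scale:
  fixes f :: "'a::euclidean_space \<Rightarrow> real"
  assumes "f \<in> borel_measurable lebesgue"
  shows "lorentz_approx w n (\<lambda>x. a * f x) = ennreal \<bar>a\<bar> * lorentz_approx w n f"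
  unfolding lorentz_approx_def K_functional_scale[OF assms] by (simp add: sum_distrib_left ac_simps)

context
  fixes w :: "real \<Rightarrow> real" and C :: real
  assumes w: "is_weight w" and quasi_concave: "quasi_concave (cum_weight_real w) C"
begin

interpretation W: quasi_concave "cum_weight_real w" C by (rule quasi_concave)

lemma hat_interp_ennreal:
  assumes r: "r \<ge> 0"
  shows "hat_interp w n (ennreal r) = ennreal (concave_interp (cum_weight_real w) (mesh n) (num_nodes n) r)"
proof -
  have "hat_interp w n (ennreal r)
      = (\<Sum>i\<in>{1..num_nodes n}. ennreal (hat_coeff (cum_weight_real w) (mesh n) (num_nodes n) i * min r (i * mesh n)))"
    unfolding hat_interp_def
  proof (intro sum.cong refl)
    fix i assume "i \<in> {1..num_nodes n}"
    then have "0 \<le> hat_coeff (cum_weight_real w) (mesh n) (num_nodes n) i" "0 \<le> min r (i * mesh n)"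
      and "min (ennreal r) (ennreal (i * mesh n)) = ennreal (min r (i * mesh n))"
      using r mesh_pos[of n] W.hat_coeff_nonneg[OF mesh_pos] by (auto intro: min_ennreal)
    then show "ennreal (hat_coeff (cum_weight_real w) (mesh n) (num_nodes n) i) * min (ennreal r) (ennreal (i * mesh n))
        = ennreal (hat_coeff (cum_weight_real w) (mesh n) (num_nodes n) i * min r (i * mesh n))"
      by (simp only: ennreal_mult)
  qed
  also have "\<dots> = ennreal (\<Sum>i\<in>{1..num_nodes n}. hat_coeff (cum_weight_real w) (mesh n) (num_nodes n) i * min r (i * mesh n))"
    by (rule sum_ennreal) (use r mesh_pos[of n] W.hat_coeff_nonneg[OF mesh_pos] in \<open>auto intro!: mult_nonneg_nonneg\<close>)
  also have "\<dots> = ennreal (concave_interp (cum_weight_real w) (mesh n) (num_nodes n) r)"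
    using W.concave_interp_eq_hat_sum[OF mesh_pos r] by simp
  finally show ?thesis .
qed

lemma hat_interp_top: "hat_interp w n \<infinity> = hat_interp w n (ennreal (Suc n))"
  unfolding hat_interp_def
proof (intro sum.cong refl)
  fix i assume "i \<in> {1..num_nodes n}"
  then have "i * mesh n \<le> num_nodes n * mesh n"
    using mesh_pos[of n] by (intro mult_right_mono) auto
  then show "ennreal (hat_coeff (cum_weight_real w) (mesh n) (num_nodes n) i) * min \<infinity> (ennreal (i * mesh n))
      = ennreal (hat_coeff (cum_weight_real w) (mesh n) (num_nodes n) i) * min (ennreal (Suc n)) (ennreal (i * mesh n))"
    by (simp add: num_nodes_mesh min_absorb2 ennreal_leI del: of_nat_Suc)
qed

lemma hat_interp_le: "hat_interp w n u \<le> 2 * cum_weight w u"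
proof -
  have real_case: "hat_interp w n (ennreal r) \<le> 2 * cum_weight w (ennreal r)" if "r > 0" for r
  proof -
    have "concave_interp (cum_weight_real w) (mesh n) (num_nodes n) r \<le> 2 * cum_weight_real w r"
      using order.trans[OF W.concave_interp_le_concave_reg[OF mesh_pos] W.concave_reg_le_twice[OF that]] that
      by simp
    then have "ennreal (concave_interp (cum_weight_real w) (mesh n) (num_nodes n) r) \<le> ennreal (2 * cum_weight_real w r)"
      by (rule ennreal_leI)
    then show ?thesis
      using that cum_weight_real_nonneg[OF w, of r]
      by (simp add: hat_interp_ennreal cum_weight_eq_real[OF w] ennreal_mult)
  qed
  show ?thesis
  proof (cases u)
    case (real r)
    then show ?thesis
      using real_case[of r] by (cases "r = 0") (auto simp: hat_interp_def)
  next
    case top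
    have "hat_interp w n \<infinity> \<le> 2 * cum_weight w (ennreal (Suc n))"
      unfolding hat_interp_top by (rule real_case) simp
    also have "\<dots> \<le> 2 * cum_weight w \<infinity>"
      by (intro mult_left_mono cum_weight_mono) auto
    finally show ?thesis using top by simp
  qed
qed

lemma hat_interp_eventually_ge:
  assumes r: "r > 0"
  shows "\<forall>\<^sub>F n in sequentially. ennreal (1 / (2 * C)) * cum_weight w (ennreal r) \<le> hat_interp w n (ennreal r)"
proof -
  obtain N :: nat where N: "max r (1 / r) < N" using reals_Archimedean2 by blast
  show ?thesis
  proof (rule eventually_sequentiallyI[of N])
    fix n assume "N \<le> n"
    then have "1 / r < Suc n" "r < Suc n" using N by auto
    then have "1 < r * Suc n" using r by (simp add: field_simps del: of_nat_Suc)
    then have "mesh n \<le> r"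
      unfolding mesh_def by (simp add: divide_le_eq mult.commute del: of_nat_Suc)
    moreover have "r \<le> num_nodes n * mesh n"
      unfolding num_nodes_mesh using \<open>r < Suc n\<close> by linarith
    ultimately have "concave_reg (cum_weight_real w) r \<le> 2 * concave_interp (cum_weight_real w) (mesh n) (num_nodes n) r"
      by (intro W.concave_reg_le_twice_interp mesh_pos)
    then have "cum_weight_real w r \<le> C * (2 * concave_interp (cum_weight_real w) (mesh n) (num_nodes n) r)"
      using W.le_concave_reg[OF r] W.C_ge_1 by (smt (verit) mult_left_mono)
    then have "1 / (2 * C) * cum_weight_real w r \<le> concave_interp (cum_weight_real w) (mesh n) (num_nodes n) r"
      using W.C_ge_1 by (simp add: field_simps)
    then show "ennreal (1 / (2 * C)) * cum_weight w (ennreal r) \<le> hat_interp w n (ennreal r)"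
      using r W.C_ge_1 cum_weight_real_nonneg[OF w, of r]
      by (simp add: hat_interp_ennreal cum_weight_eq_real[OF w] ennreal_mult[symmetric] ennreal_leI)
  qed
qed

lemma hat_interp_liminf_ge: "ennreal (1 / (2 * C)) * cum_weight w u \<le> liminf (\<lambda>n. hat_interp w n u)"
proof -
  have real_case: "ennreal (1 / (2 * C)) * cum_weight w (ennreal r) \<le> liminf (\<lambda>n. hat_interp w n (ennreal r))"
    if "r > 0" for r
    using hat_interp_eventually_ge[OF that] by (rule Liminf_bounded)
  show ?thesis
  proof (cases u)
    case (real r)
    then show ?thesis using real_case[of r] by (cases "r = 0") auto
  next
    case top
    have "ennreal (1 / (2 * C)) * cum_weight w \<infinity> = (SUP k::nat. ennreal (1 / (2 * C)) * cum_weight w (ennreal (real k)))"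
      unfolding cum_weight_top[OF w] by (rule SUP_mult_left_ennreal)
    also have "\<dots> \<le> liminf (\<lambda>n. hat_interp w n \<infinity>)"
    proof (rule SUP_least)
      fix k :: nat
      have "liminf (\<lambda>n. hat_interp w n (ennreal (real k))) \<le> liminf (\<lambda>n. hat_interp w n \<infinity>)"
        by (intro Liminf_mono always_eventually allI hat_interp_mono) simp
      then show "ennreal (1 / (2 * C)) * cum_weight w (ennreal (real k)) \<le> liminf (\<lambda>n. hat_interp w n \<infinity>)"
        using real_case[of k] by (cases "k = 0") auto
    qed
    finally show ?thesis using top by simp
  qed
qed

lemma lorentz_approx_le:
  fixes f :: "'a::euclidean_space \<Rightarrow> real"
  assumes f[measurable]: "f \<in> borel_measurable lebesgue"
  shows "lorentz_approx w n f \<le> 2 * Lambda_norm w f"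
proof -
  have "lorentz_approx w n f \<le> (\<integral>\<^sup>+ l\<in>{0..}. 2 * cum_weight w (distrib_fun f (ennreal l)) \<partial>lborel)"
    unfolding lorentz_approx_layer_cake[OF f] by (intro nn_integral_mono mult_right_mono hat_interp_le) auto
  also have "\<dots> = 2 * Lambda_norm w f"
    unfolding Lambda_norm_layer_cake[OF f weight_borel_measurable[OF w]]
    by (subst nn_integral_cmult[symmetric]) (auto simp: ac_simps)
  finally show ?thesis .
qed

lemma lorentz_approx_SUP_ge:
  fixes f :: "'a::euclidean_space \<Rightarrow> real"
  assumes f[measurable]: "f \<in> borel_measurable lebesgue"
  shows "ennreal (1 / (2 * C)) * Lambda_norm w f \<le> (SUP n. lorentz_approx w n f)"
proof -
  have [measurable]: "(\<lambda>l. hat_interp w n (distrib_fun f (ennreal l))) \<in> borel_measurable borel" for n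
    unfolding hat_interp_def by measurable
  have "ennreal (1 / (2 * C)) * Lambda_norm w f
      = (\<integral>\<^sup>+ l. ennreal (1 / (2 * C)) * (cum_weight w (distrib_fun f (ennreal l)) * indicator {0..} l) \<partial>lborel)"
    unfolding Lambda_norm_layer_cake[OF f weight_borel_measurable[OF w]]
    by (rule nn_integral_cmult[symmetric]) measurable
  also have "\<dots> \<le> (\<integral>\<^sup>+ l. liminf (\<lambda>n. hat_interp w n (distrib_fun f (ennreal l)) * indicator {0..} l) \<partial>lborel)"
    by (intro nn_integral_mono) (simp add: hat_interp_liminf_ge indicator_def)
  also have "\<dots> \<le> liminf (\<lambda>n. lorentz_approx w n f)"
    unfolding lorentz_approx_layer_cake[OF f] by (rule nn_integral_liminf) measurable
  also have "\<dots> \<le> (SUP n. lorentz_approx w n f)"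
    unfolding liminf_SUP_INF by (intro SUP_mono) (auto intro: INF_lower2[of _ _ _ "lorentz_approx w n f" for n])
  finally show ?thesis .
qed

end

section \<open>Consequences of normability\<close>

text \<open>Normability of \<open>\<Gamma>\<^sup>1\<^sub>\<alpha>(w)\<close> is used only through this property.\<close>

definition Gamma_quasi_subadditive :: "real \<Rightarrow> (real \<Rightarrow> real) \<Rightarrow> real \<Rightarrow> 'a::euclidean_space itself \<Rightarrow> bool" where
  "Gamma_quasi_subadditive \<alpha> w K _ \<longleftrightarrow> (\<forall>I (f :: nat \<Rightarrow> 'a \<Rightarrow> real).
      finite I \<and> (\<forall>i\<in>I. f i \<in> borel_measurable lebesgue \<and> (\<forall>x. f i x \<ge> 0))
      \<and> (\<lambda>x. \<Sum>i\<in>I. f i x) \<in> Gamma_space \<alpha> w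
    \<longrightarrow> Gamma_norm \<alpha> w (\<lambda>x. \<Sum>i\<in>I. f i x) \<le> ennreal K * (\<Sum>i\<in>I. Gamma_norm \<alpha> w (f i)))"

lemma Gamma_quasi_subadditiveD:
  fixes f :: "nat \<Rightarrow> 'a::euclidean_space \<Rightarrow> real"
  assumes "Gamma_quasi_subadditive \<alpha> w K TYPE('a)" and "finite I"
    and "\<And>i. i \<in> I \<Longrightarrow> f i \<in> borel_measurable lebesgue" and "\<And>i x. i \<in> I \<Longrightarrow> f i x \<ge> 0"
    and "(\<lambda>x. \<Sum>i\<in>I. f i x) \<in> Gamma_space \<alpha> w"
  shows "Gamma_norm \<alpha> w (\<lambda>x. \<Sum>i\<in>I. f i x) \<le> ennreal K * (\<Sum>i\<in>I. Gamma_norm \<alpha> w (f i))"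
  using assms unfolding Gamma_quasi_subadditive_def by blast

lemma sublinear_sum_le:
  fixes N :: "('a \<Rightarrow> real) \<Rightarrow> real"
  assumes add: "\<And>f g. f \<in> X \<Longrightarrow> g \<in> X \<Longrightarrow> N (\<lambda>x. f x + g x) \<le> N f + N g"
    and scale: "\<And>f c. f \<in> X \<Longrightarrow> N (\<lambda>x. c * f x) = \<bar>c\<bar> * N f"
    and "finite I" and partial_sums: "\<And>J. J \<subseteq> I \<Longrightarrow> (\<lambda>x. \<Sum>i\<in>J. F i x) \<in> X"
  shows "N (\<lambda>x. \<Sum>i\<in>I. F i x) \<le> (\<Sum>i\<in>I. N (F i))"
  using \<open>finite I\<close> partial_sums
proof (induction I rule: finite_induct)
  case empty
  then have "(\<lambda>x. 0) \<in> X" by auto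
  then show ?case using scale[of "\<lambda>x. 0" 0] by simp
next
  case (insert j I)
  have "F j \<in> X" using insert.prems[of "{j}"] by simp
  moreover have "(\<lambda>x. \<Sum>i\<in>I. F i x) \<in> X" using insert.prems[of I] by auto
  ultimately have "N (\<lambda>x. \<Sum>i\<in>insert j I. F i x) \<le> N (F j) + N (\<lambda>x. \<Sum>i\<in>I. F i x)"
    using add insert.hyps by simp
  also have "\<dots> \<le> N (F j) + (\<Sum>i\<in>I. N (F i))" using insert.IH insert.prems by auto
  finally show ?case using insert.hyps by simp
qed

lemma Gamma_space_partial_sum:
  assumes \<alpha>: "0 < \<alpha>" "\<alpha> < 1" and "finite I" "J \<subseteq> I"
    and f: "\<And>i. i \<in> I \<Longrightarrow> f i \<in> borel_measurable lebesgue" and nonneg: "\<And>i x. i \<in> I \<Longrightarrow> f i x \<ge> 0"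
    and sum: "(\<lambda>x. \<Sum>i\<in>I. f i x) \<in> Gamma_space \<alpha> w"
  shows "(\<lambda>x. \<Sum>i\<in>J. f i x) \<in> Gamma_space \<alpha> w"
proof (rule Gamma_space_mono_abs[OF sum _ _ \<alpha>])
  show "(\<lambda>x. \<Sum>i\<in>J. f i x) \<in> borel_measurable lebesgue"
    using f \<open>J \<subseteq> I\<close> by (intro borel_measurable_sum) auto
  fix x
  have "0 \<le> (\<Sum>i\<in>J. f i x)" using \<open>J \<subseteq> I\<close> nonneg by (auto intro: sum_nonneg)
  moreover have "(\<Sum>i\<in>J. f i x) \<le> (\<Sum>i\<in>I. f i x)"
    by (rule sum_mono2[OF \<open>finite I\<close> \<open>J \<subseteq> I\<close>]) (use nonneg in auto)
  ultimately show "\<bar>\<Sum>i\<in>J. f i x\<bar> \<le> \<bar>\<Sum>i\<in>I. f i x\<bar>" by simp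
qed

lemma Gamma_norm_sum_le_of_norm:
  fixes N :: "('a::euclidean_space \<Rightarrow> real) \<Rightarrow> real" and f :: "'i \<Rightarrow> 'a \<Rightarrow> real"
  assumes \<alpha>: "0 < \<alpha>" "\<alpha> < 1" and c: "c > 0" and C: "C > 0"
    and add: "\<And>f g. f \<in> Gamma_space \<alpha> w \<Longrightarrow> g \<in> Gamma_space \<alpha> w \<Longrightarrow> N (\<lambda>x. f x + g x) \<le> N f + N g"
    and scale: "\<And>f a. f \<in> Gamma_space \<alpha> w \<Longrightarrow> N (\<lambda>x. a * f x) = \<bar>a\<bar> * N f"
    and lower: "\<And>f. f \<in> Gamma_space \<alpha> w \<Longrightarrow> c * enn2real (Gamma_norm \<alpha> w f) \<le> N f"
    and upper: "\<And>f. f \<in> Gamma_space \<alpha> w \<Longrightarrow> N f \<le> C * enn2real (Gamma_norm \<alpha> w f)"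
    and I: "finite I" and f: "\<And>i. i \<in> I \<Longrightarrow> f i \<in> borel_measurable lebesgue"
    and nonneg: "\<And>i x. i \<in> I \<Longrightarrow> f i x \<ge> 0" and sum: "(\<lambda>x. \<Sum>i\<in>I. f i x) \<in> Gamma_space \<alpha> w"
  shows "Gamma_norm \<alpha> w (\<lambda>x. \<Sum>i\<in>I. f i x) \<le> ennreal (C / c) * (\<Sum>i\<in>I. Gamma_norm \<alpha> w (f i))"
proof -
  have partial_sums: "(\<lambda>x. \<Sum>i\<in>J. f i x) \<in> Gamma_space \<alpha> w" if "J \<subseteq> I" for J
    by (rule Gamma_space_partial_sum[OF \<alpha> I that f nonneg sum])
  have summand: "f i \<in> Gamma_space \<alpha> w" if "i \<in> I" for i
    using partial_sums[of "{i}"] that by simp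
  have finite: "ennreal (enn2real (Gamma_norm \<alpha> w g)) = Gamma_norm \<alpha> w g" if "g \<in> Gamma_space \<alpha> w" for g
    using that unfolding Gamma_space_def by simp
  have "c * enn2real (Gamma_norm \<alpha> w (\<lambda>x. \<Sum>i\<in>I. f i x)) \<le> N (\<lambda>x. \<Sum>i\<in>I. f i x)"
    by (rule lower[OF sum])
  also have "\<dots> \<le> (\<Sum>i\<in>I. N (f i))"
    by (rule sublinear_sum_le[OF add scale I partial_sums])
  also have "\<dots> \<le> C * (\<Sum>i\<in>I. enn2real (Gamma_norm \<alpha> w (f i)))"
    unfolding sum_distrib_left by (intro sum_mono upper summand)
  finally have "ennreal (c * enn2real (Gamma_norm \<alpha> w (\<lambda>x. \<Sum>i\<in>I. f i x)))
      \<le> ennreal (C * (\<Sum>i\<in>I. enn2real (Gamma_norm \<alpha> w (f i))))"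
    by (rule ennreal_leI)
  then have "ennreal c * Gamma_norm \<alpha> w (\<lambda>x. \<Sum>i\<in>I. f i x) \<le> ennreal C * (\<Sum>i\<in>I. Gamma_norm \<alpha> w (f i))"
    using c C by (simp add: ennreal_mult sum_nonneg sum_ennreal[symmetric] finite summand finite[OF sum])
  then have "ennreal (1 / c) * (ennreal c * Gamma_norm \<alpha> w (\<lambda>x. \<Sum>i\<in>I. f i x))
      \<le> ennreal (1 / c) * (ennreal C * (\<Sum>i\<in>I. Gamma_norm \<alpha> w (f i)))"
    by (rule mult_left_mono) simp
  then show ?thesis
    using c by (simp add: mult.assoc[symmetric] ennreal_mult'[symmetric])
qed

lemma Gamma_quasi_subadditive_if_normable:
  assumes "Gamma_normable \<alpha> w TYPE('a::euclidean_space)" and \<alpha>: "0 < \<alpha>" "\<alpha> < 1"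
  obtains K where "Gamma_quasi_subadditive \<alpha> w K TYPE('a)"
proof -
  obtain N :: "('a \<Rightarrow> real) \<Rightarrow> real" and c C
    where add: "\<forall>f\<in>Gamma_space \<alpha> w. \<forall>g\<in>Gamma_space \<alpha> w. N (\<lambda>x. f x + g x) \<le> N f + N g"
      and scale: "\<forall>f\<in>Gamma_space \<alpha> w. \<forall>a. N (\<lambda>x. a * f x) = \<bar>a\<bar> * N f"
      and c: "c > 0" and C: "C > 0"
      and bounds: "\<forall>f\<in>Gamma_space \<alpha> w. c * enn2real (Gamma_norm \<alpha> w f) \<le> N f \<and> N f \<le> C * enn2real (Gamma_norm \<alpha> w f)"
    using assms(1) unfolding Gamma_normable_def by blast
  have "Gamma_quasi_subadditive \<alpha> w (C / c) TYPE('a)"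
    unfolding Gamma_quasi_subadditive_def
  proof (intro allI impI, elim conjE)
    fix I and f :: "nat \<Rightarrow> 'a \<Rightarrow> real"
    assume "finite I" "\<forall>i\<in>I. f i \<in> borel_measurable lebesgue \<and> (\<forall>x. 0 \<le> f i x)"
      "(\<lambda>x. \<Sum>i\<in>I. f i x) \<in> Gamma_space \<alpha> w"
    then show "Gamma_norm \<alpha> w (\<lambda>x. \<Sum>i\<in>I. f i x) \<le> ennreal (C / c) * (\<Sum>i\<in>I. Gamma_norm \<alpha> w (f i))"
      using add scale bounds by (intro Gamma_norm_sum_le_of_norm[OF \<alpha> c C, of w N]) auto
  qed
  then show ?thesis by (rule that)
qed

section \<open>Disjoint boxes and dyadic approximation\<close>

lemma disjoint_boxes:
  assumes s: "s > 0"
  obtains B :: "nat \<Rightarrow> 'a::euclidean_space set"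
  where "\<And>i. B i \<in> sets borel" "\<And>i. emeasure lborel (B i) = ennreal s" "disjoint_family B"
proof -
  define d where "d = DIM('a)"
  define l where "l = s powr (1 / d)"
  have l: "l > 0" unfolding l_def using s by simp
  have "l ^ d = l powr real d" using l by (simp add: powr_realpow)
  also have "\<dots> = s" unfolding l_def using s by (simp add: powr_powr d_def)
  finally have l_pow: "l ^ d = s" .
  have One: "(One::'a) \<bullet> b = 1" if "b \<in> Basis" for b
    using that by (simp add: inner_sum_left sum.If_cases inner_Basis)
  define B :: "nat \<Rightarrow> 'a set" where "B i = box ((2 * real i * l) *\<^sub>R One) (((2 * real i + 1) * l) *\<^sub>R One)" for i
  have mem_B: "x \<in> B i \<longleftrightarrow> (\<forall>b\<in>Basis. 2 * real i * l < x \<bullet> b \<and> x \<bullet> b < (2 * real i + 1) * l)" for x i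
    unfolding B_def mem_box by (simp add: One)
  have "emeasure lborel (B i) = ennreal s" for i
    unfolding B_def emeasure_lborel_box_eq using l l_pow
    by (simp add: One inner_diff_left algebra_simps d_def)
  moreover have "disjoint_family B"
    unfolding disjoint_family_on_def
  proof (intro ballI impI)
    fix i j :: nat assume "i \<noteq> j"
    show "B i \<inter> B j = {}"
    proof (rule ccontr)
      assume "B i \<inter> B j \<noteq> {}"
      then obtain x where x: "x \<in> B i" "x \<in> B j" by auto
      obtain b :: 'a where b: "b \<in> Basis" using nonempty_Basis by blast
      have "2 * real i * l < (2 * real j + 1) * l" "2 * real j * l < (2 * real i + 1) * l"
        using x b mem_B by fastforce+
      then have "2 * real i < 2 * real j + 1" "2 * real j < 2 * real i + 1" using l by simp_all
      then show False using \<open>i \<noteq> j\<close> by linarith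
    qed
  qed
  ultimately show ?thesis using that[of B] by (auto simp: B_def)
qed

lemma sum_levels_eq_min_floor:
  fixes h y :: real and K :: nat
  assumes h: "h > 0" and y: "y \<ge> 0"
  shows "(\<Sum>k\<in>{1..K}. if k * h \<le> y then h else 0) = min (K * h) (h * \<lfloor>y / h\<rfloor>)"
proof -
  define t where "t = nat \<lfloor>y / h\<rfloor>"
  have t: "real t = \<lfloor>y / h\<rfloor>" unfolding t_def using y h by simp
  have iff: "k * h \<le> y \<longleftrightarrow> k \<le> t" for k :: nat
  proof -
    have "k * h \<le> y \<longleftrightarrow> real k \<le> y / h" using h by (simp add: field_simps)
    also have "\<dots> \<longleftrightarrow> k \<le> t" unfolding t_def using y h by (simp add: le_nat_iff le_floor_iff)
    finally show ?thesis .
  qed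
  have "{k \<in> {1..K}. k * h \<le> y} = {1..min K t}"
    using iff by (intro set_eqI) simp
  moreover have "(\<Sum>k\<in>{1..K}. if k * h \<le> y then h else 0) = (\<Sum>k\<in>{k \<in> {1..K}. k * h \<le> y}. h)"
    by (rule sum.inter_filter[symmetric]) simp
  ultimately have "(\<Sum>k\<in>{1..K}. if k * h \<le> y then h else 0) = (\<Sum>k\<in>{1..min K t}. h)"
    by simp
  also have "\<dots> = min (K * h) (h * \<lfloor>y / h\<rfloor>)"
    using h unfolding t[symmetric] by (simp add: min_def mult.commute)
  finally show ?thesis .
qed

lemma floor_refine_le:
  fixes y h :: real
  assumes h: "h > 0"
  shows "h * \<lfloor>y / h\<rfloor> \<le> (h / 2) * \<lfloor>y / (h / 2)\<rfloor>"
proof -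
  have "y / (h / 2) = 2 * (y / h)" using h by (simp add: field_simps)
  moreover have "2 * real_of_int \<lfloor>y / h\<rfloor> \<le> 2 * (y / h)"
    by (intro mult_left_mono of_int_floor_le) simp
  ultimately have "real_of_int (2 * \<lfloor>y / h\<rfloor>) \<le> y / (h / 2)"
    by (simp only: of_int_mult of_int_numeral)
  then have "real_of_int (2 * \<lfloor>y / h\<rfloor>) \<le> \<lfloor>y / (h / 2)\<rfloor>"
    by (simp only: of_int_le_iff le_floor_iff)
  then have "(h / 2) * real_of_int (2 * \<lfloor>y / h\<rfloor>) \<le> (h / 2) * \<lfloor>y / (h / 2)\<rfloor>"
    using h by (intro mult_left_mono) auto
  then show ?thesis by simp
qed

definition dyadic_step :: "nat \<Rightarrow> real" where "dyadic_step n = 1 / 2 ^ n"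

definition dyadic_level :: "('a::euclidean_space \<Rightarrow> real) \<Rightarrow> nat \<Rightarrow> nat \<Rightarrow> 'a set" where
  "dyadic_level f n k = {x \<in> ball 0 n. k * dyadic_step n \<le> \<bar>f x\<bar>}"

definition dyadic_approx :: "('a::euclidean_space \<Rightarrow> real) \<Rightarrow> nat \<Rightarrow> 'a \<Rightarrow> real" where
  "dyadic_approx f n x = (\<Sum>k\<in>{1..n * 2 ^ n}. dyadic_step n * indicator (dyadic_level f n k) x)"

lemma dyadic_step_pos: "dyadic_step n > 0"
  unfolding dyadic_step_def by simp

lemma dyadic_approx_eq:
  "dyadic_approx f n x = indicator (ball 0 n) x * min n (dyadic_step n * \<lfloor>\<bar>f x\<bar> / dyadic_step n\<rfloor>)"
proof (cases "x \<in> ball 0 n")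
  case True
  have "dyadic_approx f n x = (\<Sum>k\<in>{1..n * 2 ^ n}. if k * dyadic_step n \<le> \<bar>f x\<bar> then dyadic_step n else 0)"
    unfolding dyadic_approx_def dyadic_level_def using True by (intro sum.cong) auto
  also have "\<dots> = min (real (n * 2 ^ n) * dyadic_step n) (dyadic_step n * \<lfloor>\<bar>f x\<bar> / dyadic_step n\<rfloor>)"
    by (rule sum_levels_eq_min_floor[OF dyadic_step_pos]) simp
  finally show ?thesis using True by (simp add: dyadic_step_def)
qed (simp add: dyadic_approx_def dyadic_level_def)

lemma dyadic_step_Suc: "dyadic_step (Suc n) = dyadic_step n / 2"
  unfolding dyadic_step_def by simp

lemma dyadic_approx_nonneg: "dyadic_approx f n x \<ge> 0"
  unfolding dyadic_approx_def using dyadic_step_pos[of n] by (intro sum_nonneg) auto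

lemma dyadic_approx_le: "dyadic_approx f n x \<le> real n * indicator (ball 0 n) x"
  unfolding dyadic_approx_eq by (auto simp: indicator_def)

lemma dyadic_approx_mono: "dyadic_approx f n x \<le> dyadic_approx f (Suc n) x"
proof -
  have "dyadic_step n * \<lfloor>\<bar>f x\<bar> / dyadic_step n\<rfloor> \<le> dyadic_step (Suc n) * \<lfloor>\<bar>f x\<bar> / dyadic_step (Suc n)\<rfloor>"
    unfolding dyadic_step_Suc by (rule floor_refine_le[OF dyadic_step_pos])
  moreover have "0 \<le> dyadic_step n * \<lfloor>\<bar>f x\<bar> / dyadic_step n\<rfloor>"
    using dyadic_step_pos[of n] by simp
  ultimately show ?thesis
    unfolding dyadic_approx_eq by (auto simp: indicator_def intro: min.mono)
qed

lemma dyadic_approx_exhausts: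
  assumes "l < \<bar>f x\<bar>"
  shows "\<exists>n. l < \<bar>dyadic_approx f n x\<bar>"
proof -
  obtain n :: nat where n: "max (norm x) (max \<bar>f x\<bar> (1 / (\<bar>f x\<bar> - l))) < n"
    using reals_Archimedean2 by blast
  have "real n < 2 ^ n" by (rule of_nat_less_two_power)
  then have "1 / (\<bar>f x\<bar> - l) < 2 ^ n" using n by linarith
  then have "dyadic_step n < \<bar>f x\<bar> - l"
    using assms unfolding dyadic_step_def by (simp add: field_simps)
  moreover have "\<bar>f x\<bar> - dyadic_step n < dyadic_step n * \<lfloor>\<bar>f x\<bar> / dyadic_step n\<rfloor>"
    using dyadic_step_pos[of n] real_of_int_floor_gt_diff_one[of "\<bar>f x\<bar> / dyadic_step n"]
    by (simp add: field_simps)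
  ultimately have "l < dyadic_approx f n x"
    using n assms unfolding dyadic_approx_eq by (simp add: indicator_def)
  then show ?thesis by (intro exI[of _ n]) (simp add: abs_of_nonneg dyadic_approx_nonneg)
qed

lemma dyadic_level_sets:
  assumes "f \<in> borel_measurable lebesgue"
  shows "dyadic_level f n k \<in> sets lebesgue"
proof -
  have "dyadic_level f n k = ball 0 n \<inter> {x \<in> space lebesgue. k * dyadic_step n \<le> \<bar>f x\<bar>}"
    unfolding dyadic_level_def by auto
  also have "\<dots> \<in> sets lebesgue"
    using assms by (intro sets.Int) (simp, measurable)
  finally show ?thesis .
qed

lemma cum_weight_level_le_integral:
  fixes f :: "'a::euclidean_space \<Rightarrow> real"
  assumes f: "f \<in> borel_measurable lebesgue" and "h > 0" "k \<ge> 1" and E: "E \<subseteq> {x. k * h \<le> \<bar>f x\<bar>}"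
  shows "ennreal h * cum_weight w (emeasure lebesgue E)
    \<le> (\<integral>\<^sup>+ l\<in>{(real k - 1) * h ..< k * h}. cum_weight w (distrib_fun f (ennreal l)) \<partial>lborel)"
proof -
  have "ennreal h * cum_weight w (emeasure lebesgue E)
      = (\<integral>\<^sup>+ l\<in>{(real k - 1) * h ..< k * h}. cum_weight w (emeasure lebesgue E) \<partial>lborel)"
    using assms by (simp add: nn_integral_cmult_indicator algebra_simps mult.commute)
  also have "\<dots> \<le> (\<integral>\<^sup>+ l\<in>{(real k - 1) * h ..< k * h}. cum_weight w (distrib_fun f (ennreal l)) \<partial>lborel)"
  proof (intro nn_integral_mono)
    fix l
    have "emeasure lebesgue E \<le> distrib_fun f (ennreal l)" if "l \<in> {(real k - 1) * h ..< k * h}"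
    proof -
      have "0 \<le> (real k - 1) * h" using assms by simp
      then have "0 \<le> l" "l < k * h" using that by auto
      then have "E \<subseteq> {x. ennreal l < ennreal \<bar>f x\<bar>}"
        using E by (auto simp: ennreal_less_iff)
      then show ?thesis
        unfolding distrib_fun_def by (rule emeasure_mono) (rule level_set_sets_lebesgue[OF f])
    qed
    then show "cum_weight w (emeasure lebesgue E) * indicator {(real k - 1) * h ..< k * h} l
        \<le> cum_weight w (distrib_fun f (ennreal l)) * indicator {(real k - 1) * h ..< k * h} l"
      by (auto simp: indicator_def cum_weight_mono)
  qed
  finally show ?thesis .
qed

lemma sum_indicator_steps_le:
  assumes h: "h > 0"
  shows "(\<Sum>k\<in>{1..K}. indicator {(real k - 1) * h ..< k * h} l :: ennreal) \<le> indicator {0..} l"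
proof -
  let ?I = "\<lambda>k::nat. {(real k - 1) * h ..< k * h}"
  have "disjoint_family_on ?I {1..K}"
    unfolding disjoint_family_on_def
  proof (intro ballI impI)
    fix i j :: nat assume "i \<noteq> j"
    show "?I i \<inter> ?I j = {}"
    proof (rule ccontr)
      assume "?I i \<inter> ?I j \<noteq> {}"
      then have "(real i - 1) * h < real j * h" "(real j - 1) * h < real i * h" by auto
      then have "real i - 1 < real j" "real j - 1 < real i" using h by simp_all
      then show False using \<open>i \<noteq> j\<close> by linarith
    qed
  qed
  then have "(\<Sum>k\<in>{1..K}. indicator (?I k) l :: ennreal) = indicator (\<Union>k\<in>{1..K}. ?I k) l"
    by (rule indicator_UN_disjoint[symmetric, OF finite_atLeastAtMost])
  also have "\<dots> \<le> indicator {0..} l"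
  proof -
    have "(\<Union>k\<in>{1..K}. ?I k) \<subseteq> {0..}"
    proof
      fix y assume "y \<in> (\<Union>k\<in>{1..K}. ?I k)"
      then obtain k where "k \<ge> 1" "(real k - 1) * h \<le> y" by auto
      moreover have "0 \<le> (real k - 1) * h" using \<open>k \<ge> 1\<close> h by simp
      ultimately show "y \<in> {0..}" by simp
    qed
    then show ?thesis by (intro indicator_leI) blast
  qed
  finally show ?thesis .
qed

lemma sum_cum_weight_levels_le_Lambda:
  fixes f :: "'a::euclidean_space \<Rightarrow> real" and E :: "nat \<Rightarrow> 'a set"
  assumes f[measurable]: "f \<in> borel_measurable lebesgue" and w: "is_weight w" and h: "h > 0"
    and E: "\<And>k. k \<ge> 1 \<Longrightarrow> E k \<subseteq> {x. k * h \<le> \<bar>f x\<bar>}"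
  shows "(\<Sum>k\<in>{1..K}. ennreal h * cum_weight w (emeasure lebesgue (E k))) \<le> Lambda_norm w f"
proof -
  have "(\<Sum>k\<in>{1..K}. ennreal h * cum_weight w (emeasure lebesgue (E k)))
      \<le> (\<Sum>k\<in>{1..K}. \<integral>\<^sup>+ l\<in>{(real k - 1) * h ..< k * h}. cum_weight w (distrib_fun f (ennreal l)) \<partial>lborel)"
    using E by (intro sum_mono cum_weight_level_le_integral[OF f h]) auto
  also have "\<dots> = (\<integral>\<^sup>+ l. cum_weight w (distrib_fun f (ennreal l))
      * (\<Sum>k\<in>{1..K}. indicator {(real k - 1) * h ..< k * h} l) \<partial>lborel)"
    unfolding sum_distrib_left by (rule nn_integral_sum[symmetric]) measurable
  also have "\<dots> \<le> (\<integral>\<^sup>+ l\<in>{0..}. cum_weight w (distrib_fun f (ennreal l)) \<partial>lborel)"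
    by (intro nn_integral_mono mult_left_mono sum_indicator_steps_le[OF h]) simp
  also have "\<dots> = Lambda_norm w f"
    using Lambda_norm_layer_cake[OF f weight_borel_measurable[OF w]] by simp
  finally show ?thesis .
qed

section \<open>Quasi-subadditivity of \<open>\<Gamma>\<close> forces \<open>R\<^sub>1\<close> and \<open>\<Gamma>\<^sup>1\<^sub>\<alpha>(w) = \<Lambda>\<^sup>1(w)\<close>\<close>

context
  fixes w :: "real \<Rightarrow> real" and \<alpha> K :: real
  assumes w: "is_weight w" and \<alpha>: "0 < \<alpha>" "\<alpha> < 1"
    and subadditive: "Gamma_quasi_subadditive \<alpha> w K TYPE('a::euclidean_space)"
begin

text \<open>Split a set of measure \<open>s\<close> into \<open>n\<close> disjoint boxes of measure \<open>s/n\<close> in \<open>'a\<close>.\<close>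

lemma cum_weight_real_le_split:
  fixes n :: nat
  assumes s: "s > 0" and n: "n > 0"
  shows "ennreal (cum_weight_real w s) \<le> ennreal K * (n * ennreal (cum_weight_real w (s / n)))"
proof -
  have wm: "w \<in> borel_measurable borel" using weight_borel_measurable[OF w] .
  obtain B :: "nat \<Rightarrow> 'a set" where B: "\<And>i. B i \<in> sets borel" "\<And>i. emeasure lborel (B i) = ennreal (s / n)"
    and disj: "disjoint_family B"
    using disjoint_boxes[of "s / n"] s n by auto
  have B_lebesgue: "B i \<in> sets lebesgue" "emeasure lebesgue (B i) = ennreal (s / n)" for i
    using B by simp_all
  let ?E = "\<Union>i<n. B i"
  have E: "?E \<in> sets lebesgue" using B by auto
  have "emeasure lebesgue ?E = (\<Sum>i<n. emeasure lebesgue (B i))"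
    by (rule sum_emeasure[symmetric]) (use B disj in \<open>auto simp: disjoint_family_on_def\<close>)
  also have "\<dots> = ennreal s"
    using B n s by (simp add: ennreal_of_nat_eq_real_of_nat flip: ennreal_mult)
  finally have E_measure: "emeasure lebesgue ?E = ennreal s" .
  have sum_eq: "(\<lambda>x. \<Sum>i<n. indicator (B i) x) = (\<lambda>x. 1 * indicator ?E x :: real)"
    using disj by (auto simp: indicator_UN_disjoint disjoint_family_on_def)
  have "ennreal (cum_weight_real w s) = Gamma_norm \<alpha> w (\<lambda>x. \<Sum>i<n. 1 * indicator (B i) x)"
    using s Gamma_norm_indicator[OF zero_less_one E \<alpha> wm]
    unfolding mult_1 sum_eq by (simp add: E_measure cum_weight_eq_real[OF w])
  also have "\<dots> \<le> ennreal K * (\<Sum>i<n. Gamma_norm \<alpha> w (\<lambda>x. 1 * indicator (B i) x))"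
  proof (rule Gamma_quasi_subadditiveD[OF subadditive])
    show "(\<lambda>x. \<Sum>i<n. 1 * indicator (B i) x :: real) \<in> Gamma_space \<alpha> w"
      using indicator_in_Gamma_space[OF zero_less_one E w \<alpha>] E_measure unfolding mult_1 sum_eq by simp
  qed (use B_lebesgue in auto)
  also have "\<dots> = ennreal K * (n * ennreal (cum_weight_real w (s / n)))"
    using Gamma_norm_indicator[OF zero_less_one B_lebesgue(1) \<alpha> wm] B_lebesgue(2) n s
    by (simp add: cum_weight_eq_real[OF w])
  finally show ?thesis .
qed

lemma R1_if_Gamma_quasi_subadditive: "R1 w"
proof -
  have "(1 / s) * cum_weight_real w s \<le> ((2 * max K 0) / r) * cum_weight_real w r" if rs: "0 < r" "r < s" for r s
  proof -
    define n where "n = nat \<lceil>s / r\<rceil>"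
    have "1 < s / r" using rs by simp
    then have n: "s / r \<le> n" "n \<le> 2 * (s / r)" "n > 0"
      unfolding n_def by linarith+
    have "ennreal (cum_weight_real w s) \<le> ennreal K * (n * ennreal (cum_weight_real w (s / n)))"
      using rs n by (intro cum_weight_real_le_split) auto
    also have "\<dots> \<le> ennreal K * (ennreal (2 * (s / r)) * ennreal (cum_weight_real w r))"
      using n rs cum_weight_real_mono[OF w, of "s / n" r]
      by (intro mult_left_mono mult_mono) (auto simp: field_simps ennreal_of_nat_eq_real_of_nat intro!: ennreal_leI)
    finally have "cum_weight_real w s \<le> max K 0 * (2 * (s / r)) * cum_weight_real w r"
      using rs cum_weight_real_nonneg[OF w, of r]
      by (cases "K \<ge> 0") (auto simp: ennreal_mult[symmetric] mult.assoc ennreal_neg max_def)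
    then show ?thesis using rs by (simp add: field_simps)
  qed
  then show ?thesis unfolding R1_def cum_weight_real_def by blast
qed

lemma Gamma_norm_dyadic_approx_le:
  fixes f :: "'a \<Rightarrow> real"
  assumes f[measurable]: "f \<in> borel_measurable lebesgue"
  shows "Gamma_norm \<alpha> w (dyadic_approx f n) \<le> ennreal K * Lambda_norm w f"
proof -
  have wm: "w \<in> borel_measurable borel" using weight_borel_measurable[OF w] .
  have [measurable]: "dyadic_level f n k \<in> sets lebesgue" for k
    using dyadic_level_sets[OF f] .
  have ball: "(\<lambda>x::'a. real (Suc n) * indicator (ball 0 (Suc n)) x) \<in> Gamma_space \<alpha> w"
    using emeasure_lborel_ball_finite[of "0::'a" "Suc n"]
    by (intro indicator_in_Gamma_space[OF _ _ w \<alpha>]) simp_all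
  have "dyadic_approx f n \<in> Gamma_space \<alpha> w"
  proof (rule Gamma_space_mono_abs[OF ball _ _ \<alpha>])
    show "\<bar>dyadic_approx f n x\<bar> \<le> \<bar>real (Suc n) * indicator (ball 0 (Suc n)) x\<bar>" for x
      using dyadic_approx_le[of f n x] dyadic_approx_nonneg[of f n x]
      by (cases "norm x < real n") (auto simp: indicator_def)
  qed (unfold dyadic_approx_def[abs_def], measurable)
  then have "Gamma_norm \<alpha> w (dyadic_approx f n)
      \<le> ennreal K * (\<Sum>k\<in>{1..n * 2 ^ n}. Gamma_norm \<alpha> w (\<lambda>x. dyadic_step n * indicator (dyadic_level f n k) x))"
    unfolding dyadic_approx_def[abs_def] using dyadic_step_pos[of n]
    by (intro Gamma_quasi_subadditiveD[OF subadditive]) (auto simp: dyadic_approx_def[abs_def])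
  also have "\<dots> = ennreal K * (\<Sum>k\<in>{1..n * 2 ^ n}. ennreal (dyadic_step n) * cum_weight w (emeasure lebesgue (dyadic_level f n k)))"
    using Gamma_norm_indicator[OF dyadic_step_pos dyadic_level_sets[OF f] \<alpha> wm] by simp
  also have "\<dots> \<le> ennreal K * Lambda_norm w f"
    by (intro mult_left_mono sum_cum_weight_levels_le_Lambda[OF f w dyadic_step_pos])
      (auto simp: dyadic_level_def)
  finally show ?thesis .
qed

lemma Gamma_le_Lambda_if_Gamma_quasi_subadditive:
  fixes f :: "'a \<Rightarrow> real"
  assumes f[measurable]: "f \<in> borel_measurable lebesgue"
  shows "Gamma_norm \<alpha> w f \<le> ennreal K * Lambda_norm w f"
proof -
  have [measurable]: "dyadic_approx f n \<in> borel_measurable lebesgue" for n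
    using dyadic_level_sets[OF f] unfolding dyadic_approx_def[abs_def] by measurable
  have "Gamma_norm \<alpha> w f \<le> (SUP n. Gamma_norm \<alpha> w (dyadic_approx f n))"
  proof (rule Gamma_norm_le_SUP[OF f _ _ _ \<alpha> weight_borel_measurable[OF w]])
    show "\<bar>dyadic_approx f n x\<bar> \<le> \<bar>dyadic_approx f (Suc n) x\<bar>" for n x
      using dyadic_approx_mono[of f n x] dyadic_approx_nonneg[of f n x] by simp
    show "\<exists>n. l < \<bar>dyadic_approx f n x\<bar>" if "l < \<bar>f x\<bar>" for x l
      using dyadic_approx_exhausts[of l f x] that by blast
  qed simp
  also have "\<dots> \<le> ennreal K * Lambda_norm w f"
    by (rule SUP_least) (rule Gamma_norm_dyadic_approx_le[OF f])
  finally show ?thesis .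
qed

end

lemma Gamma_eq_Lambda_if_Gamma_le:
  assumes "0 < \<alpha>" "\<alpha> < 1"
    and "\<And>f :: 'a::euclidean_space \<Rightarrow> real. f \<in> borel_measurable lebesgue \<Longrightarrow> Gamma_norm \<alpha> w f \<le> ennreal K * Lambda_norm w f"
  shows "Gamma_eq_Lambda \<alpha> w TYPE('a)"
  unfolding Gamma_eq_Lambda_def
proof (intro exI[of _ "max K 1"] conjI allI impI)
  fix f :: "'a \<Rightarrow> real" assume "f \<in> borel_measurable lebesgue"
  then show "Gamma_norm \<alpha> w f \<le> ennreal (max K 1) * Lambda_norm w f"
    using assms(3) by (meson ennreal_leI max.cobounded1 mult_right_mono order_trans zero_le)
  show "Lambda_norm w f \<le> ennreal (max K 1) * Gamma_norm \<alpha> w f"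
    using Lambda_le_Gamma[OF assms(1,2), of w f] mult_right_mono[of 1 "ennreal (max K 1)" "Gamma_norm \<alpha> w f"]
    by (simp add: ennreal_leI order_trans)
qed simp

section \<open>Normability from \<open>R\<^sub>1\<close> and \<open>\<Gamma>\<^sup>1\<^sub>\<alpha>(w) = \<Lambda>\<^sup>1(w)\<close>\<close>

lemma Lambda_equivalent_norm:
  assumes w: "is_weight w" and "R1 w"
  obtains N :: "('a::euclidean_space \<Rightarrow> real) \<Rightarrow> ennreal" and c where "c > 0"
    and "\<And>f g. f \<in> borel_measurable lebesgue \<Longrightarrow> g \<in> borel_measurable lebesgue \<Longrightarrow> N (\<lambda>x. f x + g x) \<le> N f + N g"
    and "\<And>f a. f \<in> borel_measurable lebesgue \<Longrightarrow> N (\<lambda>x. a * f x) = ennreal \<bar>a\<bar> * N f"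
    and "\<And>f. f \<in> borel_measurable lebesgue \<Longrightarrow> ennreal c * Lambda_norm w f \<le> N f"
    and "\<And>f. f \<in> borel_measurable lebesgue \<Longrightarrow> N f \<le> 2 * Lambda_norm w f"
proof -
  obtain C where C: "quasi_concave (cum_weight_real w) C"
    using quasi_concave_cum_weight[OF assms] .
  show ?thesis
  proof (rule that[of "1 / (2 * C)" "\<lambda>f. SUP n. lorentz_approx w n f"])
    show "1 / (2 * C) > 0" using quasi_concave.C_ge_1[OF C] by simp
  next
    fix f g :: "'a \<Rightarrow> real"
    assume "f \<in> borel_measurable lebesgue" "g \<in> borel_measurable lebesgue"
    then show "(SUP n. lorentz_approx w n (\<lambda>x. f x + g x)) \<le> (SUP n. lorentz_approx w n f) + (SUP n. lorentz_approx w n g)"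
      by (intro SUP_least order.trans[OF lorentz_approx_add_le] add_mono SUP_upper) auto
  next
    fix f :: "'a \<Rightarrow> real" and a :: real
    assume "f \<in> borel_measurable lebesgue"
    then show "(SUP n. lorentz_approx w n (\<lambda>x. a * f x)) = ennreal \<bar>a\<bar> * (SUP n. lorentz_approx w n f)"
      by (simp add: lorentz_approx_scale SUP_mult_left_ennreal)
  next
    fix f :: "'a \<Rightarrow> real"
    assume f: "f \<in> borel_measurable lebesgue"
    show "ennreal (1 / (2 * C)) * Lambda_norm w f \<le> (SUP n. lorentz_approx w n f)"
      by (rule lorentz_approx_SUP_ge[OF w C f])
    show "(SUP n. lorentz_approx w n f) \<le> 2 * Lambda_norm w f"
      by (rule SUP_least) (rule lorentz_approx_le[OF w C f])
  qed
qed

lemma Gamma_normable_if_equivalent_norm: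
  fixes N :: "('a::euclidean_space \<Rightarrow> real) \<Rightarrow> ennreal"
  assumes "c > 0" "C > 0"
    and add: "\<And>f g. f \<in> borel_measurable lebesgue \<Longrightarrow> g \<in> borel_measurable lebesgue \<Longrightarrow> N (\<lambda>x. f x + g x) \<le> N f + N g"
    and scale: "\<And>f a. f \<in> borel_measurable lebesgue \<Longrightarrow> N (\<lambda>x. a * f x) = ennreal \<bar>a\<bar> * N f"
    and lower: "\<And>f. f \<in> borel_measurable lebesgue \<Longrightarrow> ennreal c * Gamma_norm \<alpha> w f \<le> N f"
    and upper: "\<And>f. f \<in> borel_measurable lebesgue \<Longrightarrow> N f \<le> ennreal C * Gamma_norm \<alpha> w f"
  shows "Gamma_normable \<alpha> w TYPE('a)"
proof -
  have finite: "N f < \<infinity>" if "f \<in> Gamma_space \<alpha> w" for f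
    using that upper[of f] unfolding Gamma_space_def by (auto simp: ennreal_mult_less_top order.strict_trans1)
  have "enn2real (N (\<lambda>x. f x + g x)) \<le> enn2real (N f) + enn2real (N g)"
    if f: "f \<in> Gamma_space \<alpha> w" and g: "g \<in> Gamma_space \<alpha> w" for f g
  proof -
    have "enn2real (N (\<lambda>x. f x + g x)) \<le> enn2real (N f + N g)"
      using f g finite add by (intro enn2real_mono) (auto simp: Gamma_space_def)
    then show ?thesis using f g finite by (simp add: enn2real_plus)
  qed
  moreover have "enn2real (N (\<lambda>x. a * f x)) = \<bar>a\<bar> * enn2real (N f)" if "f \<in> Gamma_space \<alpha> w" for f a
    using that by (simp add: scale Gamma_space_def enn2real_mult)
  moreover have lower': "c * enn2real (Gamma_norm \<alpha> w f) \<le> enn2real (N f)" if f: "f \<in> Gamma_space \<alpha> w" for f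
  proof -
    have "enn2real (ennreal c * Gamma_norm \<alpha> w f) \<le> enn2real (N f)"
      using f lower finite by (intro enn2real_mono) (auto simp: Gamma_space_def)
    then show ?thesis using \<open>c > 0\<close> by (simp add: enn2real_mult)
  qed
  moreover have upper': "enn2real (N f) \<le> C * enn2real (Gamma_norm \<alpha> w f)" if f: "f \<in> Gamma_space \<alpha> w" for f
  proof -
    have "enn2real (N f) \<le> enn2real (ennreal C * Gamma_norm \<alpha> w f)"
      using f upper by (intro enn2real_mono) (auto simp: Gamma_space_def ennreal_mult_less_top)
    then show ?thesis using \<open>C > 0\<close> by (simp add: enn2real_mult)
  qed
  moreover have "\<exists>c' C'. c' > 0 \<and> C' > 0 \<and> (\<forall>f\<in>Gamma_space \<alpha> w.
      c' * enn2real (Gamma_norm \<alpha> w f) \<le> enn2real (N f) \<and> enn2real (N f) \<le> C' * enn2real (Gamma_norm \<alpha> w f))"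
    using lower' upper' \<open>c > 0\<close> \<open>C > 0\<close> by blast
  ultimately show ?thesis
    unfolding Gamma_normable_def by (intro exI[of _ "\<lambda>f. enn2real (N f)"] conjI) auto
qed

lemma Gamma_normable_if_R1:
  assumes w: "is_weight w" and \<alpha>: "0 < \<alpha>" "\<alpha> < 1" and "R1 w"
    and "Gamma_eq_Lambda \<alpha> w TYPE('a::euclidean_space)"
  shows "Gamma_normable \<alpha> w TYPE('a)"
proof -
  obtain N :: "('a \<Rightarrow> real) \<Rightarrow> ennreal" and c where c: "c > 0"
    and add: "\<And>f g. f \<in> borel_measurable lebesgue \<Longrightarrow> g \<in> borel_measurable lebesgue \<Longrightarrow> N (\<lambda>x. f x + g x) \<le> N f + N g"
    and scale: "\<And>f a. f \<in> borel_measurable lebesgue \<Longrightarrow> N (\<lambda>x. a * f x) = ennreal \<bar>a\<bar> * N f"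
    and lower: "\<And>f. f \<in> borel_measurable lebesgue \<Longrightarrow> ennreal c * Lambda_norm w f \<le> N f"
    and upper: "\<And>f. f \<in> borel_measurable lebesgue \<Longrightarrow> N f \<le> 2 * Lambda_norm w f"
    by (rule Lambda_equivalent_norm[OF w \<open>R1 w\<close>]) blast
  obtain K where K: "K > 0"
    and Gamma_le: "\<And>f::'a \<Rightarrow> real. f \<in> borel_measurable lebesgue \<Longrightarrow> Gamma_norm \<alpha> w f \<le> ennreal K * Lambda_norm w f"
    using assms(5) unfolding Gamma_eq_Lambda_def by blast
  show ?thesis
  proof (rule Gamma_normable_if_equivalent_norm[of "c / K" 2 N, OF _ _ add scale])
    fix f :: "'a \<Rightarrow> real" assume f: "f \<in> borel_measurable lebesgue"
    have "ennreal (c / K) * Gamma_norm \<alpha> w f \<le> ennreal (c / K) * (ennreal K * Lambda_norm w f)"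
      by (intro mult_left_mono Gamma_le f) simp
    also have "\<dots> = ennreal c * Lambda_norm w f"
      using c K by (simp add: mult.assoc[symmetric] ennreal_mult[symmetric])
    finally show "ennreal (c / K) * Gamma_norm \<alpha> w f \<le> N f" using lower[OF f] by simp
    show "N f \<le> ennreal 2 * Gamma_norm \<alpha> w f"
      using upper[OF f] Lambda_le_Gamma[OF \<alpha>, of w f] by (simp add: mult_left_mono order_trans)
  qed (use c K in auto)
qed

theorem theorem2p17:
  fixes w :: "real \<Rightarrow> real" and \<alpha> :: real
  assumes "is_weight w" and "0 < \<alpha>" and "\<alpha> < 1"
  shows "Gamma_normable \<alpha> w TYPE('a::euclidean_space)
     \<longleftrightarrow> R1 w \<and> Gamma_eq_Lambda \<alpha> w TYPE('a)"
proof
  assume "Gamma_normable \<alpha> w TYPE('a)"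
  then obtain K where K: "Gamma_quasi_subadditive \<alpha> w K TYPE('a)"
    using Gamma_quasi_subadditive_if_normable assms(2,3) by blast
  show "R1 w \<and> Gamma_eq_Lambda \<alpha> w TYPE('a)"
  proof
    show "R1 w" by (rule R1_if_Gamma_quasi_subadditive[OF assms K])
    show "Gamma_eq_Lambda \<alpha> w TYPE('a)"
      by (rule Gamma_eq_Lambda_if_Gamma_le[OF assms(2,3)])
        (rule Gamma_le_Lambda_if_Gamma_quasi_subadditive[OF assms K])
  qed
next
  assume "R1 w \<and> Gamma_eq_Lambda \<alpha> w TYPE('a)"
  then show "Gamma_normable \<alpha> w TYPE('a)"
    using Gamma_normable_if_R1[OF assms] by blast
qed

end
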